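(* There is a polynomial-time algorithm that, given two configurations $C_s$ and $C_t$, each consisting of $n$ vertices of the infinite integer grid, decides whether there is a schedule with makespan $1$ transforming $C_s$ into $C_t$.
   Context: A configuration is a finite set $C$ of vertices of the infinite integer grid $\mathbb{Z}^2$ (robots are unlabeled and occupy these positions); it induces the subgraph $H$ of the grid with an edge between two positions iff they are at Euclidean distance $1$. A move $v\to w$ changes a robot's position from $v$ to a grid-adjacent position $w$, or keeps it ($w=v$). Two moves $v_1\to w_1$ and $v_2\to w_2$ are collision-free if $v_1\neq v_2$ and $w_1\neq w_2$. A transformation between configurations $C_1=\{v_1,\dots,v_n\}$ and $C_2=\{w_1,\dots,w_n\}$ is a set of pairwise collision-free moves $\{v_i\to w_i : i=1,\dots,n\}$. A schedule with makespan $M$ is a sequence $C_1\to C_2\to\cdots\to C_{M+1}$ of transformations. *)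

theory Defs
  imports Main
begin

type_synonym pos = "int \<times> int"

text \<open>A single move v \<rightarrow> w: w = v or w is grid-adjacent to v (Euclidean distance 1).\<close>
definition move_ok :: "pos \<Rightarrow> pos \<Rightarrow> bool" where
  "move_ok v w \<longleftrightarrow> w = v \<or> \<bar>fst v - fst w\<bar> + \<bar>snd v - snd w\<bar> = 1"

text \<open>A transformation C1 \<rightarrow> C2: a set of pairwise collision-free moves, one for each robot,
  i.e. a bijection between C1 and C2 moving each robot by a valid move.\<close>
definition transformation :: "pos set \<Rightarrow> pos set \<Rightarrow> bool" where
  "transformation C1 C2 \<longleftrightarrow>
     finite C1 \<and> finite C2 \<and> (\<exists>f. bij_betw f C1 C2 \<and> (\<forall>v\<in>C1. move_ok v (f v)))"

definition schedule :: "nat \<Rightarrow> pos set \<Rightarrow> pos set \<Rightarrow> bool" where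
  "schedule M Cs Ct \<longleftrightarrow>
     (\<exists>C :: nat \<Rightarrow> pos set. C 0 = Cs \<and> C M = Ct \<and>
        (\<forall>i<M. transformation (C i) (C (Suc i))))"

text \<open>Memory cells are indexed by integers and hold integers. No multiplication, so
  unit cost is polynomially equivalent to Turing machines.\<close>
datatype instr =
    LoadConst int int
  | Add int int int
  | Sub int int int
  | Load int int
  | Store int int
  | Jz int nat
  | Jgtz int nat
  | Halt

type_synonym ram_state = "nat \<times> (int \<Rightarrow> int)"

definition halted :: "instr list \<Rightarrow> ram_state \<Rightarrow> bool" where
  "halted P s \<longleftrightarrow> fst s \<ge> length P \<or> P ! fst s = Halt"

fun exec :: "instr \<Rightarrow> ram_state \<Rightarrow> ram_state" where
  "exec (LoadConst a c) (pc, m) = (Suc pc, m(a := c))"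
| "exec (Add a b c) (pc, m) = (Suc pc, m(a := m b + m c))"
| "exec (Sub a b c) (pc, m) = (Suc pc, m(a := m b - m c))"
| "exec (Load a b) (pc, m) = (Suc pc, m(a := m (m b)))"
| "exec (Store a b) (pc, m) = (Suc pc, m(m a := m b))"
| "exec (Jz a l) (pc, m) = (if m a = 0 then l else Suc pc, m)"
| "exec (Jgtz a l) (pc, m) = (if m a > 0 then l else Suc pc, m)"
| "exec Halt s = s"

definition step :: "instr list \<Rightarrow> ram_state \<Rightarrow> ram_state" where
  "step P s = (if halted P s then s else exec (P ! fst s) s)"

definition init :: "int list \<Rightarrow> ram_state" where
  "init xs = (0, \<lambda>i. if 0 \<le> i \<and> i < int (length xs) then xs ! nat i else 0)"

definition decides_in :: "instr list \<Rightarrow> int list \<Rightarrow> nat \<Rightarrow> bool \<Rightarrow> bool" where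
  "decides_in P xs t b \<longleftrightarrow>
     halted P ((step P ^^ t) (init xs)) \<and> (snd ((step P ^^ t) (init xs)) 0 > 0 \<longleftrightarrow> b)"

definition bitlen :: "int \<Rightarrow> nat" where
  "bitlen x = (LEAST k. \<bar>x\<bar> < 2 ^ k)"

definition input_size :: "int list \<Rightarrow> nat" where
  "input_size xs = length xs + sum_list (map bitlen xs)"

definition enc_pts :: "pos list \<Rightarrow> int list" where
  "enc_pts ps = concat (map (\<lambda>(x, y). [x, y]) ps)"

definition enc_instance :: "pos list \<Rightarrow> pos list \<Rightarrow> int list" where
  "enc_instance Cs Ct = int (length Cs) # enc_pts Cs @ enc_pts Ct"

end

theory Submission
  imports Defs
begin

text \<open>A schedule of makespan 1 is a perfect matching in the bipartite graph joining each source
  position to the target positions at grid distance at most 1, and the decision procedure is Kuhn's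
  augmenting-path algorithm on a unit-cost RAM. In round \<open>r\<close> it grows, breadth first, an
  alternating tree from the unmatched source robot \<open>r\<close>. If the tree reaches a free target, flipping
  the tree path extends the matching. Otherwise every target adjacent to the \<open>qe\<close> queued source
  robots is matched to one of the \<open>qe - 1\<close> queued robots other than \<open>r\<close>, a violation of Hall's
  condition. Four nested loops of at most \<open>n + 1\<close> iterations each give \<open>O((n + 1)\<^sup>5)\<close> steps, and
  \<open>n\<close> is bounded by the input size.\<close>

section \<open>Step-bounded runs of RAM programs\<close>

definition reaches_within :: "instr list \<Rightarrow> ram_state \<Rightarrow> nat \<Rightarrow> (ram_state \<Rightarrow> bool) \<Rightarrow> bool" where
  "reaches_within P s T Q \<longleftrightarrow> (\<exists>k\<le>T. Q ((step P ^^ k) s))"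

lemma reaches_within_here: "Q s \<Longrightarrow> reaches_within P s T Q"
  unfolding reaches_within_def by (intro exI[of _ 0]) auto

lemma reaches_within_mono:
  "reaches_within P s T Q \<Longrightarrow> T \<le> T' \<Longrightarrow> (\<And>s. Q s \<Longrightarrow> Q' s) \<Longrightarrow> reaches_within P s T' Q'"
  unfolding reaches_within_def by (meson order_trans)

lemma reaches_within_trans:
  assumes "reaches_within P s T R" "\<And>s'. R s' \<Longrightarrow> reaches_within P s' T' Q"
  shows "reaches_within P s (T + T') Q"
proof -
  obtain k where k: "k \<le> T" "R ((step P ^^ k) s)"
    using assms(1) unfolding reaches_within_def by auto
  obtain k' where k': "k' \<le> T'" "Q ((step P ^^ k') ((step P ^^ k) s))"
    using assms(2)[OF k(2)] unfolding reaches_within_def by auto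
  have "(step P ^^ (k' + k)) s = (step P ^^ k') ((step P ^^ k) s)" by (simp add: funpow_add)
  with k k' show ?thesis unfolding reaches_within_def by (intro exI[of _ "k' + k"]) auto
qed

lemma reaches_within_exec:
  assumes "pc < length P" "P ! pc \<noteq> Halt" "0 < T" "reaches_within P (exec (P ! pc) (pc, m)) (T - 1) Q"
  shows "reaches_within P (pc, m) T Q"
proof -
  obtain k where k: "k \<le> T - 1" "Q ((step P ^^ k) (exec (P ! pc) (pc, m)))"
    using assms(4) unfolding reaches_within_def by auto
  have "step P (pc, m) = exec (P ! pc) (pc, m)" using assms(1,2) by (simp add: step_def halted_def)
  then have "(step P ^^ Suc k) (pc, m) = (step P ^^ k) (exec (P ! pc) (pc, m))"
    by (simp add: funpow_Suc_right del: funpow.simps)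
  then show ?thesis using k assms(3) unfolding reaches_within_def by (intro exI[of _ "Suc k"]) auto
qed

lemma reaches_within_loop:
  fixes \<mu> :: "ram_state \<Rightarrow> nat"
  assumes iter: "\<And>s. I s \<Longrightarrow> reaches_within P s B (\<lambda>s'. Q s' \<or> (I s' \<and> \<mu> s' < \<mu> s))"
    and "I s" "\<mu> s \<le> N"
  shows "reaches_within P s ((N + 1) * B) Q"
proof -
  have "reaches_within P t ((\<mu> t + 1) * B) Q" if "I t" for t
    using that
  proof (induction "\<mu> t" arbitrary: t rule: less_induct)
    case (less t)
    have "reaches_within P t (B + \<mu> t * B) Q"
    proof (rule reaches_within_trans[OF iter[OF less.prems]])
      fix t' assume "Q t' \<or> I t' \<and> \<mu> t' < \<mu> t"
      then show "reaches_within P t' (\<mu> t * B) Q"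
      proof
        assume t': "I t' \<and> \<mu> t' < \<mu> t"
        then have "reaches_within P t' ((\<mu> t' + 1) * B) Q" using less.hyps by blast
        moreover have "(\<mu> t' + 1) * B \<le> \<mu> t * B" using t' by (intro mult_right_mono) auto
        ultimately show ?thesis by (rule reaches_within_mono) auto
      qed (rule reaches_within_here)
    qed
    then show ?case by (simp add: algebra_simps)
  qed
  moreover have "(\<mu> s + 1) * B \<le> (N + 1) * B" using \<open>\<mu> s \<le> N\<close> by (intro mult_right_mono) auto
  ultimately show ?thesis using \<open>I s\<close> by (blast intro: reaches_within_mono)
qed

definition at_exit :: "nat set \<Rightarrow> (ram_state \<Rightarrow> bool) \<Rightarrow> ram_state \<Rightarrow> bool" where
  "at_exit E Q s \<longleftrightarrow> fst s \<in> E \<and> Q s"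

text \<open>Symbolic execution of a block with exit labels \<open>E\<close>: the premise \<open>pc \<notin> E\<close> is logically
  redundant, but it stops the execution from running past an exit.\<close>

lemma reaches_within_exec_until:
  "pc \<notin> E \<Longrightarrow> pc < length P \<Longrightarrow> P ! pc \<noteq> Halt \<Longrightarrow> 0 < T \<Longrightarrow>
   reaches_within P (exec (P ! pc) (pc, m)) (T - 1) (at_exit E Q) \<Longrightarrow> reaches_within P (pc, m) T (at_exit E Q)"
  by (rule reaches_within_exec)

lemma reaches_within_exit: "pc \<in> E \<Longrightarrow> Q (pc, m) \<Longrightarrow> reaches_within P (pc, m) T (at_exit E Q)"
  by (intro reaches_within_here) (simp add: at_exit_def)

lemma reaches_within_at_exitD:
  "reaches_within P s T (at_exit E Q) \<Longrightarrow> (\<And>s. fst s \<in> E \<Longrightarrow> Q s \<Longrightarrow> R s) \<Longrightarrow> reaches_within P s T R"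
  by (erule reaches_within_mono) (auto simp: at_exit_def)

text \<open>Stated with \<open>pc + 1\<close> instead of \<open>Suc pc\<close> so that program counters stay numerals.\<close>

lemma exec_pc_plus_1 [simp]:
  "exec (LoadConst a c) (pc, m) = (pc + 1, m(a := c))"
  "exec (Add a b c) (pc, m) = (pc + 1, m(a := m b + m c))"
  "exec (Sub a b c) (pc, m) = (pc + 1, m(a := m b - m c))"
  "exec (Load a b) (pc, m) = (pc + 1, m(a := m (m b)))"
  "exec (Store a b) (pc, m) = (pc + 1, m(m a := m b))"
  "exec (Jz a l) (pc, m) = (if m a = 0 then l else pc + 1, m)"
  "exec (Jgtz a l) (pc, m) = (if m a > 0 then l else pc + 1, m)"
  by simp_all

declare exec.simps [simp del]

section \<open>Schedules of makespan 1 as perfect matchings\<close>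

definition perfect_matching :: "int \<Rightarrow> (int \<Rightarrow> int \<Rightarrow> bool) \<Rightarrow> bool" where
  "perfect_matching n A \<longleftrightarrow>
     (\<exists>g. inj_on g {1..n} \<and> g ` {1..n} \<subseteq> {1..n} \<and> (\<forall>i\<in>{1..n}. A i (g i)))"

lemma matching_transfer:
  assumes "finite I" and \<alpha>: "bij_betw \<alpha> I X" and \<beta>: "bij_betw \<beta> I Y"
  shows "(\<exists>g. inj_on g I \<and> g ` I \<subseteq> I \<and> (\<forall>i\<in>I. R (\<alpha> i) (\<beta> (g i)))) \<longleftrightarrow>
         (\<exists>f. bij_betw f X Y \<and> (\<forall>x\<in>X. R x (f x)))"
proof
  assume "\<exists>g. inj_on g I \<and> g ` I \<subseteq> I \<and> (\<forall>i\<in>I. R (\<alpha> i) (\<beta> (g i)))"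
  then obtain g where g: "inj_on g I" "g ` I \<subseteq> I" "\<forall>i\<in>I. R (\<alpha> i) (\<beta> (g i))" by blast
  have "bij_betw g I I" using g \<open>finite I\<close> by (simp add: bij_betw_def endo_inj_surj)
  then have "bij_betw (\<beta> \<circ> g \<circ> inv_into I \<alpha>) X Y"
    using bij_betw_inv_into[OF \<alpha>] \<beta> by (auto intro: bij_betw_trans)
  moreover have "R x ((\<beta> \<circ> g \<circ> inv_into I \<alpha>) x)" if "x \<in> X" for x
  proof -
    have "x \<in> \<alpha> ` I" using \<alpha> that by (simp add: bij_betw_def)
    then show ?thesis using g(3) inv_into_into[of x \<alpha> I] f_inv_into_f[of x \<alpha> I] by force
  qed
  ultimately show "\<exists>f. bij_betw f X Y \<and> (\<forall>x\<in>X. R x (f x))" by blast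
next
  assume "\<exists>f. bij_betw f X Y \<and> (\<forall>x\<in>X. R x (f x))"
  then obtain f where f: "bij_betw f X Y" "\<forall>x\<in>X. R x (f x)" by blast
  let ?g = "inv_into I \<beta> \<circ> f \<circ> \<alpha>"
  have "bij_betw ?g I I" using \<alpha> f(1) bij_betw_inv_into[OF \<beta>] by (auto intro: bij_betw_trans)
  moreover have "\<beta> (?g i) = f (\<alpha> i)" if "i \<in> I" for i
  proof -
    have "f (\<alpha> i) \<in> \<beta> ` I" using that \<alpha> \<beta> f(1) by (auto simp: bij_betw_def)
    then show ?thesis by (simp add: f_inv_into_f)
  qed
  ultimately show "\<exists>g. inj_on g I \<and> g ` I \<subseteq> I \<and> (\<forall>i\<in>I. R (\<alpha> i) (\<beta> (g i)))"
    using f(2) \<alpha> by (intro exI[of _ ?g]) (auto simp: bij_betw_def)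
qed

lemma bij_betw_nth_int:
  assumes "distinct xs"
  shows "bij_betw (\<lambda>i. xs ! nat (i - 1)) {1..int (length xs)} (set xs)"
proof -
  have "bij_betw (\<lambda>i. nat (i - 1)) {1..int (length xs)} {..<length xs}"
    by (rule bij_betw_byWitness[where f' = "\<lambda>k. int k + 1"]) auto
  from bij_betw_trans[OF this bij_betw_nth[OF assms refl refl]] show ?thesis
    by (simp add: comp_def)
qed

lemma move_ok_iff: "move_ok v w \<longleftrightarrow> \<bar>fst v - fst w\<bar> + \<bar>snd v - snd w\<bar> \<le> 1"
  unfolding move_ok_def by (cases v; cases w) auto

lemma schedule_1_iff: "schedule 1 C C' \<longleftrightarrow> transformation C C'"
proof
  assume "schedule 1 C C'"
  then show "transformation C C'" by (auto simp: schedule_def One_nat_def)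
next
  assume "transformation C C'"
  then show "schedule 1 C C'" unfolding schedule_def
    by (intro exI[of _ "\<lambda>i. if i = 0 then C else C'"]) (auto simp: One_nat_def)
qed

lemma transformation_iff_perfect_matching:
  assumes "distinct Cs" "distinct Ct" "length Cs = length Ct"
    and "\<And>i j. i \<in> {1..int (length Cs)} \<Longrightarrow> j \<in> {1..int (length Cs)} \<Longrightarrow>
           A i j \<longleftrightarrow> move_ok (Cs ! nat (i - 1)) (Ct ! nat (j - 1))"
  shows "transformation (set Cs) (set Ct) \<longleftrightarrow> perfect_matching (int (length Cs)) A"
proof -
  have "perfect_matching (int (length Cs)) A \<longleftrightarrow>
        (\<exists>g. inj_on g {1..int (length Cs)} \<and> g ` {1..int (length Cs)} \<subseteq> {1..int (length Cs)} \<and>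
           (\<forall>i\<in>{1..int (length Cs)}. move_ok (Cs ! nat (i - 1)) (Ct ! nat (g i - 1))))"
    unfolding perfect_matching_def using assms(4) by (intro ex_cong1) (auto simp: image_subset_iff)
  also have "\<dots> \<longleftrightarrow> (\<exists>f. bij_betw f (set Cs) (set Ct) \<and> (\<forall>v\<in>set Cs. move_ok v (f v)))"
    using bij_betw_nth_int[OF assms(1)] bij_betw_nth_int[OF assms(2)] assms(3)
    by (intro matching_transfer) auto
  finally show ?thesis by (simp add: transformation_def)
qed

section \<open>Alternating BFS trees\<close>

definition partial_matching :: "int \<Rightarrow> (int \<Rightarrow> int \<Rightarrow> bool) \<Rightarrow> (int \<Rightarrow> int) \<Rightarrow> int \<Rightarrow> bool" where
  "partial_matching n A mate r \<longleftrightarrow>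
    (\<forall>i. 1 \<le> i \<and> i \<le> n \<longrightarrow>
       0 \<le> mate i \<and> mate i \<le> n \<and> (mate i = 0 \<longleftrightarrow> r \<le> i) \<and> (mate i \<noteq> 0 \<longrightarrow> A i (mate i))) \<and>
    (\<forall>i i'. 1 \<le> i \<and> i \<le> n \<and> 1 \<le> i' \<and> i' \<le> n \<and> mate i \<noteq> 0 \<and> mate i = mate i' \<longrightarrow> i = i')"

definition bfs_tree ::
    "int \<Rightarrow> (int \<Rightarrow> int \<Rightarrow> bool) \<Rightarrow> (int \<Rightarrow> int) \<Rightarrow> (int \<Rightarrow> int) \<Rightarrow> (int \<Rightarrow> int) \<Rightarrow> (int \<Rightarrow> int) \<Rightarrow>
     int \<Rightarrow> int \<Rightarrow> bool" where
  "bfs_tree n A mate seen par queue r qe \<longleftrightarrow>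
    1 \<le> r \<and> r \<le> n \<and> partial_matching n A mate r \<and> 1 \<le> qe \<and> qe \<le> n \<and> queue 1 = r \<and>
    (\<forall>q. 1 \<le> q \<and> q \<le> qe \<longrightarrow> 1 \<le> queue q \<and> queue q \<le> n) \<and>
    (\<forall>q q'. 1 \<le> q \<and> q \<le> qe \<and> 1 \<le> q' \<and> q' \<le> qe \<and> queue q = queue q' \<longrightarrow> q = q') \<and>
    (\<forall>j. 1 \<le> j \<and> j \<le> n \<longrightarrow> 0 \<le> seen j \<and> seen j \<le> r) \<and>
    (\<forall>q. 2 \<le> q \<and> q \<le> qe \<longrightarrow>
       mate (queue q) \<noteq> 0 \<and> seen (mate (queue q)) = r \<and>
       1 \<le> par (mate (queue q)) \<and> par (mate (queue q)) < q) \<and>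
    (\<forall>j. 1 \<le> j \<and> j \<le> n \<and> seen j = r \<longrightarrow> 1 \<le> par j \<and> par j \<le> qe \<and> A (queue (par j)) j)"

text \<open>Every target reached in round \<open>r\<close>, except the one being processed, is the mate of a queued
  robot; once the queue is exhausted this is the violation of Hall's condition.\<close>

definition queue_covers :: "int \<Rightarrow> (int \<Rightarrow> int) \<Rightarrow> (int \<Rightarrow> int) \<Rightarrow> (int \<Rightarrow> int) \<Rightarrow> int \<Rightarrow> int \<Rightarrow> int \<Rightarrow> bool" where
  "queue_covers n mate seen queue r qe x \<longleftrightarrow>
    (\<forall>j. 1 \<le> j \<and> j \<le> n \<and> seen j = r \<and> j \<noteq> x \<longrightarrow> (\<exists>q. 2 \<le> q \<and> q \<le> qe \<and> mate (queue q) = j))"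

definition rows_scanned :: "int \<Rightarrow> (int \<Rightarrow> int \<Rightarrow> bool) \<Rightarrow> (int \<Rightarrow> int) \<Rightarrow> (int \<Rightarrow> int) \<Rightarrow> int \<Rightarrow> int \<Rightarrow> bool" where
  "rows_scanned n A queue seen r p \<longleftrightarrow>
    (\<forall>q j. 1 \<le> q \<and> q < p \<and> 1 \<le> j \<and> j \<le> n \<and> A (queue q) j \<longrightarrow> seen j = r)"

definition row_scanned_below :: "int \<Rightarrow> (int \<Rightarrow> int \<Rightarrow> bool) \<Rightarrow> int \<Rightarrow> (int \<Rightarrow> int) \<Rightarrow> int \<Rightarrow> int \<Rightarrow> bool" where
  "row_scanned_below n A i seen r j \<longleftrightarrow> (\<forall>j'. 1 \<le> j' \<and> j' < j \<and> j' \<le> n \<and> A i j' \<longrightarrow> seen j' = r)"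

definition parents_at_most :: "int \<Rightarrow> (int \<Rightarrow> int) \<Rightarrow> (int \<Rightarrow> int) \<Rightarrow> int \<Rightarrow> int \<Rightarrow> bool" where
  "parents_at_most n seen par r p \<longleftrightarrow> (\<forall>j. 1 \<le> j \<and> j \<le> n \<and> seen j = r \<longrightarrow> par j \<le> p)"

lemma partial_matchingD:
  assumes "partial_matching n A mate r" "1 \<le> i" "i \<le> n"
  shows "0 \<le> mate i" "mate i \<le> n" "mate i = 0 \<longleftrightarrow> r \<le> i" "mate i \<noteq> 0 \<Longrightarrow> A i (mate i)"
    "1 \<le> i' \<Longrightarrow> i' \<le> n \<Longrightarrow> mate i \<noteq> 0 \<Longrightarrow> mate i = mate i' \<Longrightarrow> i = i'"
  using assms unfolding partial_matching_def by blast+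

lemma bfs_treeD:
  assumes "bfs_tree n A mate seen par queue r qe"
  shows "1 \<le> r" "r \<le> n" "partial_matching n A mate r" "1 \<le> qe" "qe \<le> n" "queue 1 = r"
    "\<And>q. 1 \<le> q \<Longrightarrow> q \<le> qe \<Longrightarrow> 1 \<le> queue q \<and> queue q \<le> n"
    "\<And>q q'. 1 \<le> q \<Longrightarrow> q \<le> qe \<Longrightarrow> 1 \<le> q' \<Longrightarrow> q' \<le> qe \<Longrightarrow> queue q = queue q' \<Longrightarrow> q = q'"
    "\<And>j. 1 \<le> j \<Longrightarrow> j \<le> n \<Longrightarrow> 0 \<le> seen j \<and> seen j \<le> r"
    "\<And>q. 2 \<le> q \<Longrightarrow> q \<le> qe \<Longrightarrow>
       mate (queue q) \<noteq> 0 \<and> seen (mate (queue q)) = r \<and> 1 \<le> par (mate (queue q)) \<and> par (mate (queue q)) < q"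
    "\<And>j. 1 \<le> j \<Longrightarrow> j \<le> n \<Longrightarrow> seen j = r \<Longrightarrow> 1 \<le> par j \<and> par j \<le> qe \<and> A (queue (par j)) j"
  using assms unfolding bfs_tree_def by blast+

lemma bfs_tree_start:
  assumes "partial_matching n A mate r" "1 \<le> r" "r \<le> n" "\<forall>j. 1 \<le> j \<and> j \<le> n \<longrightarrow> 0 \<le> seen j \<and> seen j < r"
  shows "bfs_tree n A mate seen par (queue(1 := r)) r 1 \<and> queue_covers n mate seen (queue(1 := r)) r 1 0 \<and>
         rows_scanned n A (queue(1 := r)) seen r 1 \<and> parents_at_most n seen par r 0"
  using assms unfolding bfs_tree_def queue_covers_def rows_scanned_def parents_at_most_def
  by (auto simp: less_le)

lemma rows_scanned_next:
  assumes "rows_scanned n A queue seen r p" "row_scanned_below n A (queue p) seen r (n + 1)"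
  shows "rows_scanned n A queue seen r (p + 1)"
  using assms unfolding rows_scanned_def row_scanned_below_def
  by (metis int_one_le_iff_zero_less le_less zless_add1_eq zless_imp_add1_zle)

lemma row_scanned_below_next:
  assumes "row_scanned_below n A i seen r j" "seen j = r \<or> \<not> A i j"
  shows "row_scanned_below n A i seen r (j + 1)"
  using assms unfolding row_scanned_below_def by (metis zless_add1_eq)

lemma bfs_visit:
  assumes tree: "bfs_tree n A mate seen par queue r qe" and cov: "queue_covers n mate seen queue r qe 0"
    and rows: "rows_scanned n A queue seen r p" and row: "row_scanned_below n A (queue p) seen r j"
    and pb: "parents_at_most n seen par r p"
    and j: "1 \<le> j" "j \<le> n" "seen j \<noteq> r" "A (queue p) j" and p: "1 \<le> p" "p \<le> qe"
  shows "bfs_tree n A mate (seen(j := r)) (par(j := p)) queue r qe \<and>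
    queue_covers n mate (seen(j := r)) queue r qe j \<and> rows_scanned n A queue (seen(j := r)) r p \<and>
    row_scanned_below n A (queue p) (seen(j := r)) r (j + 1) \<and>
    parents_at_most n (seen(j := r)) (par(j := p)) r p \<and>
    (\<forall>q. 1 \<le> q \<and> q \<le> qe \<longrightarrow> mate (queue q) \<noteq> j)"
proof -
  note t = bfs_treeD[OF tree]
  have unqueued: "mate (queue q) \<noteq> j" if "1 \<le> q" "q \<le> qe" for q
  proof (cases "q = 1")
    case True
    then show ?thesis using t(1,2,6) partial_matchingD(3)[OF t(3), of r] j(1) by auto
  next
    case False
    then show ?thesis using t(10)[of q] that j(3) by auto
  qed
  have "0 \<le> (seen(j := r)) j' \<and> (seen(j := r)) j' \<le> r" if "1 \<le> j'" "j' \<le> n" for j'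
    using t(1) t(9)[OF that] by auto
  moreover have "mate (queue q) \<noteq> 0 \<and> (seen(j := r)) (mate (queue q)) = r \<and>
      1 \<le> (par(j := p)) (mate (queue q)) \<and> (par(j := p)) (mate (queue q)) < q" if "2 \<le> q" "q \<le> qe" for q
    using t(10)[OF that] unqueued[of q] that by auto
  moreover have "1 \<le> (par(j := p)) j' \<and> (par(j := p)) j' \<le> qe \<and> A (queue ((par(j := p)) j')) j'"
    if "1 \<le> j'" "j' \<le> n" "(seen(j := r)) j' = r" for j'
    using t(11)[of j'] that p j by (cases "j' = j") auto
  ultimately have "bfs_tree n A mate (seen(j := r)) (par(j := p)) queue r qe"
    unfolding bfs_tree_def using t(1-8) by blast
  moreover have "queue_covers n mate (seen(j := r)) queue r qe j"
    using cov unfolding queue_covers_def by auto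
  moreover have "rows_scanned n A queue (seen(j := r)) r p"
    using rows unfolding rows_scanned_def by auto
  moreover have "row_scanned_below n A (queue p) (seen(j := r)) r (j + 1)"
    using row unfolding row_scanned_below_def by auto
  moreover have "parents_at_most n (seen(j := r)) (par(j := p)) r p"
    using pb unfolding parents_at_most_def by auto
  ultimately show ?thesis using unqueued by blast
qed

lemma card_queue:
  assumes "bfs_tree n A mate seen par queue r qe"
  shows "card (queue ` {1..qe}) = nat qe" "queue ` {1..qe} \<subseteq> {1..n}"
proof -
  have "inj_on queue {1..qe}" using bfs_treeD(8)[OF assms] by (auto intro: inj_onI)
  then show "card (queue ` {1..qe}) = nat qe" by (simp add: card_image)
  show "queue ` {1..qe} \<subseteq> {1..n}" using bfs_treeD(7)[OF assms] by auto
qed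

lemma queue_not_full:
  assumes "bfs_tree n A mate seen par queue r qe" "1 \<le> k" "k \<le> n" "k \<notin> queue ` {1..qe}"
  shows "qe + 1 \<le> n"
proof -
  have "queue ` {1..qe} \<subseteq> {1..n} - {k}" using card_queue(2)[OF assms(1)] assms(4) by auto
  then have "card (queue ` {1..qe}) \<le> card ({1..n} - {k})" by (intro card_mono) auto
  then show ?thesis using card_queue(1)[OF assms(1)] assms(2,3) by simp
qed

lemma queue_covers_enqueue:
  assumes cov: "queue_covers n mate seen queue r qe j" and "mate k = j" "1 \<le> qe"
  shows "queue_covers n mate seen (queue(qe + 1 := k)) r (qe + 1) 0"
  unfolding queue_covers_def
proof (intro allI impI)
  fix j' assume j': "1 \<le> j' \<and> j' \<le> n \<and> seen j' = r \<and> j' \<noteq> 0"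
  show "\<exists>q\<ge>2. q \<le> qe + 1 \<and> mate ((queue(qe + 1 := k)) q) = j'"
  proof (cases "j' = j")
    case True then show ?thesis using assms(2,3) by (intro exI[of _ "qe + 1"]) auto
  next
    case False
    then obtain q where "2 \<le> q" "q \<le> qe" "mate (queue q) = j'"
      using cov j' unfolding queue_covers_def by blast
    then show ?thesis by (intro exI[of _ q]) auto
  qed
qed

lemma bfs_enqueue:
  assumes tree: "bfs_tree n A mate seen par queue r qe" and cov: "queue_covers n mate seen queue r qe j"
    and rows: "rows_scanned n A queue seen r p" and row: "row_scanned_below n A (queue p) seen r (j + 1)"
    and pb: "parents_at_most n seen par r p"
    and j: "1 \<le> j" "j \<le> n" "seen j = r" "par j = p"
    and unqueued: "\<forall>q. 1 \<le> q \<and> q \<le> qe \<longrightarrow> mate (queue q) \<noteq> j"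
    and k: "1 \<le> k" "k \<le> n" "mate k = j" and p: "1 \<le> p" "p \<le> qe"
  shows "bfs_tree n A mate seen par (queue(qe + 1 := k)) r (qe + 1) \<and>
    queue_covers n mate seen (queue(qe + 1 := k)) r (qe + 1) 0 \<and>
    rows_scanned n A (queue(qe + 1 := k)) seen r p \<and>
    row_scanned_below n A ((queue(qe + 1 := k)) p) seen r (j + 1) \<and>
    parents_at_most n seen par r p \<and> p \<le> qe + 1 \<and> (queue(qe + 1 := k)) p = queue p"
proof -
  note t = bfs_treeD[OF tree]
  let ?queue = "queue(qe + 1 := k)"
  have fresh: "k \<noteq> queue q" if "1 \<le> q" "q \<le> qe" for q using unqueued that k(3) by auto
  then have "qe + 1 \<le> n" using queue_not_full[OF tree k(1,2)] by fastforce
  moreover have "1 \<le> qe + 1" "?queue 1 = r" using t(4,6) by auto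
  moreover have "1 \<le> ?queue q \<and> ?queue q \<le> n" if "1 \<le> q" "q \<le> qe + 1" for q
    using t(7)[of q] that k by auto
  moreover have "q = q'" if "1 \<le> q" "q \<le> qe + 1" "1 \<le> q'" "q' \<le> qe + 1" "?queue q = ?queue q'" for q q'
    using t(8)[of q q'] fresh[of q] fresh[of q'] that by (auto split: if_splits)
  moreover have "mate (?queue q) \<noteq> 0 \<and> seen (mate (?queue q)) = r \<and>
      1 \<le> par (mate (?queue q)) \<and> par (mate (?queue q)) < q" if "2 \<le> q" "q \<le> qe + 1" for q
    using t(10)[of q] that j k p by (cases "q = qe + 1") auto
  moreover have "1 \<le> par j' \<and> par j' \<le> qe + 1 \<and> A (?queue (par j')) j'"
    if "1 \<le> j'" "j' \<le> n" "seen j' = r" for j'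
    using t(11)[OF that] by auto
  ultimately have "bfs_tree n A mate seen par ?queue r (qe + 1)"
    unfolding bfs_tree_def using t(1-4,9) \<open>?queue 1 = r\<close> by blast
  moreover have "queue_covers n mate seen ?queue r (qe + 1) 0"
    using queue_covers_enqueue[OF cov k(3) t(4)] .
  moreover have "rows_scanned n A ?queue seen r p"
    using rows p unfolding rows_scanned_def by auto
  ultimately show ?thesis using row pb p by auto
qed

lemma partial_matching_complete:
  assumes "partial_matching n A mate (n + 1)"
  shows "perfect_matching n A"
  unfolding perfect_matching_def
proof (intro exI conjI)
  show "inj_on mate {1..n}"
    using partial_matchingD(3,5)[OF assms] by (force intro: inj_onI)
  show "mate ` {1..n} \<subseteq> {1..n}" "\<forall>i\<in>{1..n}. A i (mate i)"
    using partial_matchingD(1-4)[OF assms] by force+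
qed

lemma bfs_exhausted_no_perfect_matching:
  assumes tree: "bfs_tree n A mate seen par queue r qe" and cov: "queue_covers n mate seen queue r qe 0"
    and rows: "rows_scanned n A queue seen r (qe + 1)"
  shows "\<not> perfect_matching n A"
proof
  assume "perfect_matching n A"
  then obtain g where g: "inj_on g {1..n}" "g ` {1..n} \<subseteq> {1..n}" "\<forall>i\<in>{1..n}. A i (g i)"
    unfolding perfect_matching_def by blast
  note t = bfs_treeD[OF tree]
  let ?S = "queue ` {1..qe}"
  have "g ` ?S \<subseteq> mate ` queue ` {2..qe}"
  proof
    fix y assume "y \<in> g ` ?S"
    then obtain q where q: "1 \<le> q" "q \<le> qe" "y = g (queue q)" by auto
    have "queue q \<in> {1..n}" using t(7)[OF q(1,2)] by simp
    then have "y \<in> {1..n}" "A (queue q) y" using g(2,3) q(3) by blast+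
    then have "seen y = r" using rows q unfolding rows_scanned_def by auto
    with \<open>y \<in> {1..n}\<close> show "y \<in> mate ` queue ` {2..qe}"
      using cov unfolding queue_covers_def by fastforce
  qed
  then have "card (g ` ?S) \<le> card (mate ` queue ` {2..qe})" by (intro card_mono) auto
  also have "\<dots> \<le> card {2..qe}" by (metis card_image_le finite_atLeastAtMost_int finite_imageI image_image)
  finally have "card (g ` ?S) < card ?S" using card_queue(1)[OF tree] t(4) by simp
  moreover have "card (g ` ?S) = card ?S"
    using g(1) card_queue(2)[OF tree] by (intro card_image) (auto intro: inj_on_subset)
  ultimately show False by simp
qed

lemma partial_matching_update:
  assumes pm: "partial_matching n A mate r" and i: "1 \<le> i" "i \<le> n" and j: "1 \<le> j" "j \<le> n" "A i j"
    and free: "\<forall>x. 1 \<le> x \<and> x \<le> n \<longrightarrow> mate x \<noteq> j"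
    and r': "i < r'" "\<And>x. x \<noteq> i \<Longrightarrow> r \<le> x \<longleftrightarrow> r' \<le> x"
  shows "partial_matching n A (mate(i := j)) r'"
  unfolding partial_matching_def
proof (rule conjI; intro allI impI)
  fix x assume x: "1 \<le> x \<and> x \<le> n"
  show "0 \<le> (mate(i := j)) x \<and> (mate(i := j)) x \<le> n \<and> ((mate(i := j)) x = 0 \<longleftrightarrow> r' \<le> x) \<and>
      ((mate(i := j)) x \<noteq> 0 \<longrightarrow> A x ((mate(i := j)) x))"
    using partial_matchingD(1-4)[OF pm, of x] x j r' by (cases "x = i") auto
next
  fix x x' assume "1 \<le> x \<and> x \<le> n \<and> 1 \<le> x' \<and> x' \<le> n \<and> (mate(i := j)) x \<noteq> 0 \<and>
      (mate(i := j)) x = (mate(i := j)) x'"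
  then show "x = x'"
    using partial_matchingD(5)[OF pm, of x x'] free by (auto split: if_splits)
qed

lemma augment_step:
  assumes tree: "bfs_tree n A mate0 seen par queue r qe" and pm: "partial_matching n A mate r"
    and j: "1 \<le> j" "j \<le> n" "seen j = r" and free: "\<forall>i. 1 \<le> i \<and> i \<le> n \<longrightarrow> mate i \<noteq> j"
    and agree: "\<forall>q. 1 \<le> q \<and> q \<le> par j \<longrightarrow> mate (queue q) = mate0 (queue q)" and "par j \<noteq> 1"
  shows "partial_matching n A (mate(queue (par j) := j)) r \<and> 1 \<le> mate (queue (par j)) \<and>
     mate (queue (par j)) \<le> n \<and> seen (mate (queue (par j))) = r \<and>
     (\<forall>x. 1 \<le> x \<and> x \<le> n \<longrightarrow> (mate(queue (par j) := j)) x \<noteq> mate (queue (par j))) \<and>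
     (\<forall>q. 1 \<le> q \<and> q \<le> par (mate (queue (par j))) \<longrightarrow> (mate(queue (par j) := j)) (queue q) = mate0 (queue q)) \<and>
     1 \<le> par (mate (queue (par j))) \<and> par (mate (queue (par j))) < par j"
proof -
  note t = bfs_treeD[OF tree]
  define i where "i = queue (par j)"
  define j' where "j' = mate i"
  have b: "2 \<le> par j" "par j \<le> qe" "A i j" using t(11)[OF j] \<open>par j \<noteq> 1\<close> unfolding i_def by auto
  have i: "1 \<le> i" "i \<le> n" using t(7)[of "par j"] b unfolding i_def by auto
  have "j' = mate0 i" using agree b unfolding i_def j'_def by auto
  then have j': "j' \<noteq> 0" "seen j' = r" "1 \<le> par j'" "par j' < par j"
    using t(10)[OF b(1,2)] unfolding i_def by auto
  then have j'_range: "1 \<le> j'" "j' \<le> n" "i < r"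
    using partial_matchingD(1-3)[OF pm i] unfolding j'_def by auto
  have "partial_matching n A (mate(i := j)) r"
    by (rule partial_matching_update[OF pm i j(1,2) b(3) free j'_range(3)]) simp
  moreover have "(mate(i := j)) x \<noteq> j'" if "1 \<le> x" "x \<le> n" for x
  proof (cases "x = i")
    case True
    then show ?thesis using free i unfolding j'_def by auto
  next
    case False
    then show ?thesis using partial_matchingD(5)[OF pm i that] j'(1) unfolding j'_def by auto
  qed
  moreover have "(mate(i := j)) (queue q) = mate0 (queue q)" if "1 \<le> q" "q \<le> par j'" for q
  proof -
    have "q < par j" using that j'(4) by simp
    then have "queue q \<noteq> i" using t(8)[of q "par j"] that b(1,2) unfolding i_def by force
    then show ?thesis using agree \<open>q < par j\<close> that(1) by simp
  qed
  ultimately show ?thesis using j' j'_range unfolding i_def[symmetric] j'_def[symmetric] by blast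
qed

lemma augment_finish:
  assumes tree: "bfs_tree n A mate0 seen par queue r qe" and pm: "partial_matching n A mate r"
    and j: "1 \<le> j" "j \<le> n" "seen j = r" and free: "\<forall>i. 1 \<le> i \<and> i \<le> n \<longrightarrow> mate i \<noteq> j"
    and "par j = 1"
  shows "partial_matching n A (mate(queue (par j) := j)) (r + 1) \<and> 1 \<le> queue (par j) \<and> r + 1 \<le> n + 1 \<and>
    1 \<le> r + 1 \<and> (\<forall>j. 1 \<le> j \<and> j \<le> n \<longrightarrow> 0 \<le> seen j \<and> seen j < r + 1)"
proof -
  note t = bfs_treeD[OF tree]
  have "queue (par j) = r" "A r j" using t(6) t(11)[OF j] \<open>par j = 1\<close> by auto
  moreover have "partial_matching n A (mate(r := j)) (r + 1)"
    by (rule partial_matching_update[OF pm t(1,2) j(1,2) \<open>A r j\<close> free]) auto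
  ultimately show ?thesis using t(1,2,9) by fastforce
qed

section \<open>The matching program\<close>

text \<open>Memory layout of \<open>matching_prog\<close>: cell \<open>0\<close> holds \<open>n\<close> and finally the answer, source robot \<open>i\<close>
  sits at cells \<open>2i - 1, 2i\<close> and target robot \<open>j\<close> at cells \<open>2n + 2j - 1, 2n + 2j\<close> (see
  \<open>enc_instance\<close>). The scalars \<open>r, p, qe, i, j, k\<close> live in the cells \<open>-1, ..., -6\<close>, the cells
  \<open>-11, ..., -22\<close> are scratch, and four arrays indexed by \<open>1..n\<close> are interleaved below \<open>-100\<close>
  (see \<open>arr_cell\<close>; array \<open>k\<close> is read through \<open>arr k\<close>): \<open>mate\<close> (the target matched to a source
  robot, \<open>0\<close> if none), \<open>seen\<close> (the last round in which a target was reached), \<open>par\<close> (the queue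
  position it was reached from) and \<open>queue\<close> (the BFS queue of source robots).\<close>

definition matching_prog :: "instr list" where
  "matching_prog = [
    LoadConst (-1) 1,
    Sub (-11) (-1) 0,  \<comment> \<open>1: round loop\<close>
    Jgtz (-11) 105,
    LoadConst (-12) (-107),
    Store (-12) (-1),
    LoadConst (-3) 1,
    LoadConst (-2) 1,
    Sub (-11) (-2) (-3),  \<comment> \<open>7: BFS queue loop\<close>
    Jgtz (-11) 107,
    Add (-12) (-2) (-2),
    Add (-12) (-12) (-12),
    LoadConst (-13) (-103),
    Sub (-12) (-13) (-12),
    Load (-4) (-12),
    LoadConst (-5) 1,
    Sub (-11) (-5) 0,  \<comment> \<open>15: scan over the targets j\<close>
    Jgtz (-11) 75,
    Add (-12) (-5) (-5),
    Add (-12) (-12) (-12),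
    LoadConst (-13) (-101),
    Sub (-14) (-13) (-12),
    Load (-15) (-14),
    Sub (-15) (-15) (-1),
    Jz (-15) 71,
    Add (-16) (-4) (-4),
    Load (-17) (-16),
    LoadConst (-18) 1,
    Sub (-16) (-16) (-18),
    Load (-19) (-16),
    Add (-16) (-5) (-5),
    Add (-16) (-16) 0,
    Add (-16) (-16) 0,
    Load (-20) (-16),
    Sub (-16) (-16) (-18),
    Load (-21) (-16),
    Sub (-19) (-19) (-21),
    Jgtz (-19) 39,
    LoadConst (-22) 0,
    Sub (-19) (-22) (-19),
    Sub (-17) (-17) (-20),
    Jgtz (-17) 43,
    LoadConst (-22) 0,
    Sub (-17) (-22) (-17),
    Add (-19) (-19) (-17),
    Sub (-19) (-19) (-18),
    Jgtz (-19) 71,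
    Store (-14) (-1),
    LoadConst (-13) (-102),
    Sub (-14) (-13) (-12),
    Store (-14) (-2),
    LoadConst (-6) 1,
    Sub (-11) (-6) 0,  \<comment> \<open>51: search for the source robot k with mate k = j\<close>
    Jgtz (-11) 79,
    Add (-12) (-6) (-6),
    Add (-12) (-12) (-12),
    LoadConst (-13) (-100),
    Sub (-12) (-13) (-12),
    Load (-15) (-12),
    Sub (-15) (-15) (-5),
    Jz (-15) 64,
    LoadConst (-18) 1,
    Add (-6) (-6) (-18),
    LoadConst (-22) 0,
    Jz (-22) 51,
    LoadConst (-18) 1,
    Add (-3) (-3) (-18),
    Add (-12) (-3) (-3),
    Add (-12) (-12) (-12),
    LoadConst (-13) (-103),
    Sub (-12) (-13) (-12),
    Store (-12) (-6),
    LoadConst (-18) 1,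
    Add (-5) (-5) (-18),
    LoadConst (-22) 0,
    Jz (-22) 15,
    LoadConst (-18) 1,
    Add (-2) (-2) (-18),
    LoadConst (-22) 0,
    Jz (-22) 7,
    Add (-12) (-5) (-5),  \<comment> \<open>79: augmentation along the par pointers\<close>
    Add (-12) (-12) (-12),
    LoadConst (-13) (-102),
    Sub (-12) (-13) (-12),
    Load (-2) (-12),
    Add (-12) (-2) (-2),
    Add (-12) (-12) (-12),
    LoadConst (-13) (-103),
    Sub (-12) (-13) (-12),
    Load (-4) (-12),
    Add (-12) (-4) (-4),
    Add (-12) (-12) (-12),
    LoadConst (-13) (-100),
    Sub (-12) (-13) (-12),
    Load (-15) (-12),
    Store (-12) (-5),
    LoadConst (-18) 1,
    Sub (-11) (-2) (-18),
    Jz (-11) 101,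
    LoadConst (-22) 0,
    Add (-5) (-15) (-22),
    Jz (-22) 79,
    LoadConst (-18) 1,
    Add (-1) (-1) (-18),
    LoadConst (-22) 0,
    Jz (-22) 1,
    LoadConst 0 1,  \<comment> \<open>105: accept\<close>
    Halt,
    LoadConst 0 0,  \<comment> \<open>107: reject\<close>
    Halt]"

text \<open>Keeps the program counter \<open>1\<close> from being rewritten to \<open>Suc 0\<close>, which the fetch table below
  would no longer match.\<close>

declare One_nat_def [simp del]

lemma matching_prog_length: "length matching_prog = 109" by (simp add: matching_prog_def)

lemma matching_prog_nth:
  "matching_prog ! 0 = LoadConst (-1) 1"
  "matching_prog ! 1 = Sub (-11) (-1) 0"
  "matching_prog ! 2 = Jgtz (-11) 105"
  "matching_prog ! 3 = LoadConst (-12) (-107)"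
  "matching_prog ! 4 = Store (-12) (-1)"
  "matching_prog ! 5 = LoadConst (-3) 1"
  "matching_prog ! 6 = LoadConst (-2) 1"
  "matching_prog ! 7 = Sub (-11) (-2) (-3)"
  "matching_prog ! 8 = Jgtz (-11) 107"
  "matching_prog ! 9 = Add (-12) (-2) (-2)"
  "matching_prog ! 10 = Add (-12) (-12) (-12)"
  "matching_prog ! 11 = LoadConst (-13) (-103)"
  "matching_prog ! 12 = Sub (-12) (-13) (-12)"
  "matching_prog ! 13 = Load (-4) (-12)"
  "matching_prog ! 14 = LoadConst (-5) 1"
  "matching_prog ! 15 = Sub (-11) (-5) 0"
  "matching_prog ! 16 = Jgtz (-11) 75"
  "matching_prog ! 17 = Add (-12) (-5) (-5)"
  "matching_prog ! 18 = Add (-12) (-12) (-12)"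
  "matching_prog ! 19 = LoadConst (-13) (-101)"
  "matching_prog ! 20 = Sub (-14) (-13) (-12)"
  "matching_prog ! 21 = Load (-15) (-14)"
  "matching_prog ! 22 = Sub (-15) (-15) (-1)"
  "matching_prog ! 23 = Jz (-15) 71"
  "matching_prog ! 24 = Add (-16) (-4) (-4)"
  "matching_prog ! 25 = Load (-17) (-16)"
  "matching_prog ! 26 = LoadConst (-18) 1"
  "matching_prog ! 27 = Sub (-16) (-16) (-18)"
  "matching_prog ! 28 = Load (-19) (-16)"
  "matching_prog ! 29 = Add (-16) (-5) (-5)"
  "matching_prog ! 30 = Add (-16) (-16) 0"
  "matching_prog ! 31 = Add (-16) (-16) 0"
  "matching_prog ! 32 = Load (-20) (-16)"
  "matching_prog ! 33 = Sub (-16) (-16) (-18)"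
  "matching_prog ! 34 = Load (-21) (-16)"
  "matching_prog ! 35 = Sub (-19) (-19) (-21)"
  "matching_prog ! 36 = Jgtz (-19) 39"
  "matching_prog ! 37 = LoadConst (-22) 0"
  "matching_prog ! 38 = Sub (-19) (-22) (-19)"
  "matching_prog ! 39 = Sub (-17) (-17) (-20)"
  "matching_prog ! 40 = Jgtz (-17) 43"
  "matching_prog ! 41 = LoadConst (-22) 0"
  "matching_prog ! 42 = Sub (-17) (-22) (-17)"
  "matching_prog ! 43 = Add (-19) (-19) (-17)"
  "matching_prog ! 44 = Sub (-19) (-19) (-18)"
  "matching_prog ! 45 = Jgtz (-19) 71"
  "matching_prog ! 46 = Store (-14) (-1)"
  "matching_prog ! 47 = LoadConst (-13) (-102)"
  "matching_prog ! 48 = Sub (-14) (-13) (-12)"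
  "matching_prog ! 49 = Store (-14) (-2)"
  "matching_prog ! 50 = LoadConst (-6) 1"
  "matching_prog ! 51 = Sub (-11) (-6) 0"
  "matching_prog ! 52 = Jgtz (-11) 79"
  "matching_prog ! 53 = Add (-12) (-6) (-6)"
  "matching_prog ! 54 = Add (-12) (-12) (-12)"
  "matching_prog ! 55 = LoadConst (-13) (-100)"
  "matching_prog ! 56 = Sub (-12) (-13) (-12)"
  "matching_prog ! 57 = Load (-15) (-12)"
  "matching_prog ! 58 = Sub (-15) (-15) (-5)"
  "matching_prog ! 59 = Jz (-15) 64"
  "matching_prog ! 60 = LoadConst (-18) 1"
  "matching_prog ! 61 = Add (-6) (-6) (-18)"
  "matching_prog ! 62 = LoadConst (-22) 0"
  "matching_prog ! 63 = Jz (-22) 51"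
  "matching_prog ! 64 = LoadConst (-18) 1"
  "matching_prog ! 65 = Add (-3) (-3) (-18)"
  "matching_prog ! 66 = Add (-12) (-3) (-3)"
  "matching_prog ! 67 = Add (-12) (-12) (-12)"
  "matching_prog ! 68 = LoadConst (-13) (-103)"
  "matching_prog ! 69 = Sub (-12) (-13) (-12)"
  "matching_prog ! 70 = Store (-12) (-6)"
  "matching_prog ! 71 = LoadConst (-18) 1"
  "matching_prog ! 72 = Add (-5) (-5) (-18)"
  "matching_prog ! 73 = LoadConst (-22) 0"
  "matching_prog ! 74 = Jz (-22) 15"
  "matching_prog ! 75 = LoadConst (-18) 1"
  "matching_prog ! 76 = Add (-2) (-2) (-18)"
  "matching_prog ! 77 = LoadConst (-22) 0"
  "matching_prog ! 78 = Jz (-22) 7"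
  "matching_prog ! 79 = Add (-12) (-5) (-5)"
  "matching_prog ! 80 = Add (-12) (-12) (-12)"
  "matching_prog ! 81 = LoadConst (-13) (-102)"
  "matching_prog ! 82 = Sub (-12) (-13) (-12)"
  "matching_prog ! 83 = Load (-2) (-12)"
  "matching_prog ! 84 = Add (-12) (-2) (-2)"
  "matching_prog ! 85 = Add (-12) (-12) (-12)"
  "matching_prog ! 86 = LoadConst (-13) (-103)"
  "matching_prog ! 87 = Sub (-12) (-13) (-12)"
  "matching_prog ! 88 = Load (-4) (-12)"
  "matching_prog ! 89 = Add (-12) (-4) (-4)"
  "matching_prog ! 90 = Add (-12) (-12) (-12)"
  "matching_prog ! 91 = LoadConst (-13) (-100)"
  "matching_prog ! 92 = Sub (-12) (-13) (-12)"
  "matching_prog ! 93 = Load (-15) (-12)"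
  "matching_prog ! 94 = Store (-12) (-5)"
  "matching_prog ! 95 = LoadConst (-18) 1"
  "matching_prog ! 96 = Sub (-11) (-2) (-18)"
  "matching_prog ! 97 = Jz (-11) 101"
  "matching_prog ! 98 = LoadConst (-22) 0"
  "matching_prog ! 99 = Add (-5) (-15) (-22)"
  "matching_prog ! 100 = Jz (-22) 79"
  "matching_prog ! 101 = LoadConst (-18) 1"
  "matching_prog ! 102 = Add (-1) (-1) (-18)"
  "matching_prog ! 103 = LoadConst (-22) 0"
  "matching_prog ! 104 = Jz (-22) 1"
  "matching_prog ! 105 = LoadConst 0 1"
  "matching_prog ! 106 = Halt"
  "matching_prog ! 107 = LoadConst 0 0"
  "matching_prog ! 108 = Halt"
  by (simp_all add: matching_prog_def)

definition arr_cell :: "int \<Rightarrow> int \<Rightarrow> int" where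
  "arr_cell k x = -4 * x - 100 - k"

definition arr :: "int \<Rightarrow> (int \<Rightarrow> int) \<Rightarrow> int \<Rightarrow> int" where
  "arr k m x = (if 1 \<le> x then m (arr_cell k x) else 0)"

lemma arr_cell_ne_scalar [simp]:
  "1 \<le> x \<Longrightarrow> 0 \<le> k \<Longrightarrow> -100 < c \<Longrightarrow> c = arr_cell k x \<longleftrightarrow> False"
  "1 \<le> x \<Longrightarrow> 0 \<le> k \<Longrightarrow> -100 < c \<Longrightarrow> arr_cell k x = c \<longleftrightarrow> False"
  "0 \<le> x \<Longrightarrow> 0 \<le> k \<Longrightarrow> -100 < c \<Longrightarrow> c = arr_cell k (x + 1) \<longleftrightarrow> False"
  "0 \<le> x \<Longrightarrow> 0 \<le> k \<Longrightarrow> -100 < c \<Longrightarrow> arr_cell k (x + 1) = c \<longleftrightarrow> False"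
  by (auto simp: arr_cell_def)

lemma arr_cell_eq_iff [simp]:
  "0 \<le> k \<Longrightarrow> k \<le> 3 \<Longrightarrow> 0 \<le> k' \<Longrightarrow> k' \<le> 3 \<Longrightarrow> arr_cell k x = arr_cell k' y \<longleftrightarrow> k = k' \<and> x = y"
  unfolding arr_cell_def by presburger

lemma arr_cell_neg [simp]: "1 \<le> x \<Longrightarrow> 0 \<le> k \<Longrightarrow> arr_cell k x < 0"
  by (simp add: arr_cell_def)

lemma arr_upd_scalar [simp]: "-100 < c \<Longrightarrow> 0 \<le> k \<Longrightarrow> arr k (m(c := v)) = arr k m"
  by (auto simp: arr_def fun_eq_iff arr_cell_def)

lemma arr_upd_arr [simp]:
  "1 \<le> y \<Longrightarrow> 0 \<le> k \<Longrightarrow> k \<le> 3 \<Longrightarrow> 0 \<le> k' \<Longrightarrow> k' \<le> 3 \<Longrightarrow>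
   arr k (m(arr_cell k' y := v)) = (if k = k' then (arr k m)(y := v) else arr k m)"
  by (auto simp: arr_def fun_eq_iff)

lemma arr_upd_queue_1 [simp]:
  "0 \<le> k \<Longrightarrow> k \<le> 3 \<Longrightarrow> arr k (m(-107 := v)) = (if k = 3 then (arr k m)(1 := v) else arr k m)"
  using arr_upd_arr[of 1 k 3 m v] by (simp add: arr_cell_def)

text \<open>The next two simp rules fold what \<open>arr_def\<close> and \<open>arr_cell_def\<close> unfold, so they may only be
  declared after the lemmas above.\<close>

lemma read_arr [simp]: "1 \<le> x \<Longrightarrow> m (arr_cell k x) = arr k m x"
  by (simp add: arr_def)

lemma arr_cell_numeral [simp]:
  "- 100 - 4 * x = arr_cell 0 x"
  "- 101 - 4 * x = arr_cell 1 x"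
  "- 102 - 4 * x = arr_cell 2 x"
  "- 103 - 4 * x = arr_cell 3 x"
  "- 107 - 4 * x = arr_cell 3 (x + 1)"
  by (simp_all add: arr_cell_def)

definition input_intact :: "(int \<Rightarrow> int) \<Rightarrow> (int \<Rightarrow> int) \<Rightarrow> bool" where
  "input_intact m0 m \<longleftrightarrow> m 0 = m0 0 \<and> (\<forall>a. 1 \<le> a \<longrightarrow> m a = m0 a)"

lemma input_intact_upd [simp]: "c < 0 \<Longrightarrow> input_intact m0 (m(c := v)) = input_intact m0 m"
  by (auto simp: input_intact_def)

definition vars :: "(int \<Rightarrow> int) \<Rightarrow>
    (int \<Rightarrow> int) \<times> (int \<Rightarrow> int) \<times> (int \<Rightarrow> int) \<times> (int \<Rightarrow> int) \<times> int \<times> int \<times> int \<times> int \<times> int \<times> int" where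
  "vars m = (arr 0 m, arr 1 m, arr 2 m, arr 3 m, m (-1), m (-2), m (-3), m (-4), m (-5), m (-6))"

lemma vars_eq:
  "vars m = (mate, seen, par, queue, r, p, qe, i, j, k) \<longleftrightarrow>
   arr 0 m = mate \<and> arr 1 m = seen \<and> arr 2 m = par \<and> arr 3 m = queue \<and>
   m (-1) = r \<and> m (-2) = p \<and> m (-3) = qe \<and> m (-4) = i \<and> m (-5) = j \<and> m (-6) = k"
  by (simp add: vars_def)

definition input_adj :: "(int \<Rightarrow> int) \<Rightarrow> int \<Rightarrow> int \<Rightarrow> int \<Rightarrow> bool" where
  "input_adj m0 n i j \<longleftrightarrow> \<bar>m0 (2*i-1) - m0 (2*n+2*j-1)\<bar> + \<bar>m0 (2*i) - m0 (2*n+2*j)\<bar> \<le> 1"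

lemma block_init:
  assumes "input_intact m0 m"
  shows "reaches_within matching_prog (0, m) 1
    (\<lambda>s. fst s = 1 \<and> input_intact m0 (snd s) \<and> vars (snd s) = vars (m(-1 := 1)))"
  by (rule reaches_within_exec)
    (simp_all add: assms matching_prog_nth matching_prog_length reaches_within_here)

lemma block_round:
  assumes "input_intact m0 m" "m0 0 = n" "vars m = (mate, seen, par, queue, r, p, qe, i, j, k)"
  shows "reaches_within matching_prog (1, m) 10 (at_exit {106, 7} (\<lambda>s.
    (fst s = 106 \<longrightarrow> n < r \<and> snd s 0 = 1) \<and>
    (fst s = 7 \<longrightarrow> r \<le> n \<and> input_intact m0 (snd s) \<and>
       vars (snd s) = (mate, seen, par, queue(1 := r), r, 1, 1, i, j, k))))"
proof -
  have "m 0 = n" using assms(1,2) by (simp add: input_intact_def)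
  with assms(1) assms(3)[unfolded vars_eq] show ?thesis
    apply (elim conjE)
    apply ((rule reaches_within_exec_until, (simp; fail), simp add: matching_prog_length,
            simp add: matching_prog_nth, simp, simp add: matching_prog_nth) |
           (rule reaches_within_exit, (simp; fail), (auto simp: vars_def; fail)) | (intro conjI impI))+
    done
qed

lemma block_queue:
  assumes "input_intact m0 m" "m0 0 = n" "vars m = (mate, seen, par, queue, r, p, qe, i, j, k)" "1 \<le> p"
  shows "reaches_within matching_prog (7, m) 10 (at_exit {108, 15} (\<lambda>s.
    (fst s = 108 \<longrightarrow> qe < p \<and> snd s 0 = 0) \<and>
    (fst s = 15 \<longrightarrow> p \<le> qe \<and> input_intact m0 (snd s) \<and>
       vars (snd s) = (mate, seen, par, queue, r, p, qe, queue p, 1, k))))"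
proof -
  have "m 0 = n" using assms(1,2) by (simp add: input_intact_def)
  with assms(1,4) assms(3)[unfolded vars_eq] show ?thesis
    apply (elim conjE)
    apply ((rule reaches_within_exec_until, (simp; fail), simp add: matching_prog_length,
            simp add: matching_prog_nth, simp, simp add: matching_prog_nth) |
           (rule reaches_within_exit, (simp; fail), (auto simp: vars_def; fail)) | (intro conjI impI))+
    done
qed

lemma block_scan:
  assumes "input_intact m0 m" "m0 0 = n" "vars m = (mate, seen, par, queue, r, p, qe, i, j, k)"
    "1 \<le> i" "1 \<le> j" "0 \<le> n"
  shows "reaches_within matching_prog (15, m) 40 (at_exit {7, 15, 51} (\<lambda>s.
    (fst s = 7 \<longrightarrow> n < j \<and> input_intact m0 (snd s) \<and>
       vars (snd s) = (mate, seen, par, queue, r, p + 1, qe, i, j, k)) \<and>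
    (fst s = 15 \<longrightarrow> j \<le> n \<and> (seen j = r \<or> \<not> input_adj m0 n i j) \<and> input_intact m0 (snd s) \<and>
       vars (snd s) = (mate, seen, par, queue, r, p, qe, i, j + 1, k)) \<and>
    (fst s = 51 \<longrightarrow> j \<le> n \<and> seen j \<noteq> r \<and> input_adj m0 n i j \<and> input_intact m0 (snd s) \<and>
       vars (snd s) = (mate, seen(j := r), par(j := p), queue, r, p, qe, i, j, 1))))"
proof -
  have "m 0 = n" "m (2*i) = m0 (2*i)" "m (2*i - 1) = m0 (2*i - 1)"
    "m (2*n + 2*j) = m0 (2*n + 2*j)" "m (2*n + 2*j - 1) = m0 (2*n + 2*j - 1)"
    using assms(1,2,4-6) by (auto simp: input_intact_def)
  with assms(1,4-6) assms(3)[unfolded vars_eq] show ?thesis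
    apply (elim conjE)
    apply (rule reaches_within_exec, simp add: matching_prog_length, simp add: matching_prog_nth, simp,
           simp add: matching_prog_nth)
    apply ((rule reaches_within_exec_until, (simp; fail), simp add: matching_prog_length,
            simp add: matching_prog_nth, simp, simp add: matching_prog_nth) |
           (rule reaches_within_exit, (simp; fail), (auto simp: vars_def input_adj_def; fail)) |
           (intro conjI impI))+
    done
qed

lemma block_search:
  assumes "input_intact m0 m" "m0 0 = n" "vars m = (mate, seen, par, queue, r, p, qe, i, j, k)"
    "1 \<le> k" "0 \<le> qe"
  shows "reaches_within matching_prog (51, m) 25 (at_exit {79, 15, 51} (\<lambda>s.
    (fst s = 79 \<longrightarrow> n < k \<and> input_intact m0 (snd s) \<and>
       vars (snd s) = (mate, seen, par, queue, r, p, qe, i, j, k)) \<and>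
    (fst s = 15 \<longrightarrow> k \<le> n \<and> mate k = j \<and> input_intact m0 (snd s) \<and>
       vars (snd s) = (mate, seen, par, queue(qe + 1 := k), r, p, qe + 1, i, j + 1, k)) \<and>
    (fst s = 51 \<longrightarrow> k \<le> n \<and> mate k \<noteq> j \<and> input_intact m0 (snd s) \<and>
       vars (snd s) = (mate, seen, par, queue, r, p, qe, i, j, k + 1))))"
proof -
  have "m 0 = n" using assms(1,2) by (simp add: input_intact_def)
  with assms(1,4,5) assms(3)[unfolded vars_eq] show ?thesis
    apply (elim conjE)
    apply (rule reaches_within_exec, simp add: matching_prog_length, simp add: matching_prog_nth, simp,
           simp add: matching_prog_nth)
    apply ((rule reaches_within_exec_until, (simp; fail), simp add: matching_prog_length,
            simp add: matching_prog_nth, simp, simp add: matching_prog_nth) |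
           (rule reaches_within_exit, (simp; fail), (auto simp: vars_def; fail)) | (intro conjI impI))+
    done
qed

lemma block_augment:
  assumes "input_intact m0 m" "m0 0 = n" "vars m = (mate, seen, par, queue, r, p, qe, i, j, k)"
    "1 \<le> j" "1 \<le> par j" "1 \<le> queue (par j)"
  shows "reaches_within matching_prog (79, m) 30 (at_exit {1, 79} (\<lambda>s.
    (fst s = 1 \<longrightarrow> par j = 1 \<and> input_intact m0 (snd s) \<and>
       vars (snd s) = (mate(queue (par j) := j), seen, par, queue, r + 1, par j, qe, queue (par j), j, k)) \<and>
    (fst s = 79 \<longrightarrow> par j \<noteq> 1 \<and> input_intact m0 (snd s) \<and>
       vars (snd s) = (mate(queue (par j) := j), seen, par, queue, r, par j, qe, queue (par j),
                       mate (queue (par j)), k))))"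
proof -
  have "m 0 = n" using assms(1,2) by (simp add: input_intact_def)
  with assms(1,4-6) assms(3)[unfolded vars_eq] show ?thesis
    apply (elim conjE)
    apply (rule reaches_within_exec, simp add: matching_prog_length, simp add: matching_prog_nth, simp,
           simp add: matching_prog_nth)
    apply ((rule reaches_within_exec_until, (simp; fail), simp add: matching_prog_length,
            simp add: matching_prog_nth, simp, simp add: matching_prog_nth) |
           (rule reaches_within_exit, (simp; fail), (auto simp: vars_def; fail)) | (intro conjI impI))+
    done
qed

section \<open>Correctness and running time\<close>

locale input_memory =
  fixes m0 :: "int \<Rightarrow> int" and n :: int
  assumes m0_0: "m0 0 = n" and n_nonneg: "0 \<le> n" and neg_cells_zero: "\<forall>a<0. m0 a = 0"
begin

abbreviation "adj \<equiv> input_adj m0 n"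

definition L :: nat where "L = nat n"

definition round_inv :: "int \<Rightarrow> (int \<Rightarrow> int) \<Rightarrow> bool" where
  "round_inv r m \<longleftrightarrow> input_intact m0 m \<and> m (-1) = r \<and> 1 \<le> r \<and> r \<le> n + 1 \<and>
     partial_matching n adj (arr 0 m) r \<and> (\<forall>j. 1 \<le> j \<and> j \<le> n \<longrightarrow> 0 \<le> arr 1 m j \<and> arr 1 m j < r)"

definition queue_inv :: "int \<Rightarrow> int \<Rightarrow> (int \<Rightarrow> int) \<Rightarrow> bool" where
  "queue_inv r p m \<longleftrightarrow> input_intact m0 m \<and> m (-1) = r \<and> m (-2) = p \<and>
     bfs_tree n adj (arr 0 m) (arr 1 m) (arr 2 m) (arr 3 m) r (m (-3)) \<and>
     queue_covers n (arr 0 m) (arr 1 m) (arr 3 m) r (m (-3)) 0 \<and> 1 \<le> p \<and> p \<le> m (-3) + 1 \<and>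
     rows_scanned n adj (arr 3 m) (arr 1 m) r p \<and> parents_at_most n (arr 1 m) (arr 2 m) r (p - 1)"

definition scan_inv :: "int \<Rightarrow> int \<Rightarrow> (int \<Rightarrow> int) \<Rightarrow> bool" where
  "scan_inv r p m \<longleftrightarrow> input_intact m0 m \<and> m (-1) = r \<and> m (-2) = p \<and>
     bfs_tree n adj (arr 0 m) (arr 1 m) (arr 2 m) (arr 3 m) r (m (-3)) \<and>
     queue_covers n (arr 0 m) (arr 1 m) (arr 3 m) r (m (-3)) 0 \<and> 1 \<le> p \<and> p \<le> m (-3) \<and>
     m (-4) = arr 3 m p \<and> 1 \<le> m (-5) \<and> m (-5) \<le> n + 1 \<and> rows_scanned n adj (arr 3 m) (arr 1 m) r p \<and>
     row_scanned_below n adj (m (-4)) (arr 1 m) r (m (-5)) \<and> parents_at_most n (arr 1 m) (arr 2 m) r p"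

definition search_inv :: "int \<Rightarrow> int \<Rightarrow> int \<Rightarrow> (int \<Rightarrow> int) \<Rightarrow> bool" where
  "search_inv r p j m \<longleftrightarrow> input_intact m0 m \<and> m (-1) = r \<and> m (-2) = p \<and> m (-5) = j \<and> 1 \<le> j \<and> j \<le> n \<and>
     bfs_tree n adj (arr 0 m) (arr 1 m) (arr 2 m) (arr 3 m) r (m (-3)) \<and>
     queue_covers n (arr 0 m) (arr 1 m) (arr 3 m) r (m (-3)) j \<and> 1 \<le> p \<and> p \<le> m (-3) \<and>
     m (-4) = arr 3 m p \<and> rows_scanned n adj (arr 3 m) (arr 1 m) r p \<and>
     row_scanned_below n adj (m (-4)) (arr 1 m) r (j + 1) \<and>
     parents_at_most n (arr 1 m) (arr 2 m) r p \<and> arr 1 m j = r \<and> arr 2 m j = p \<and>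
     (\<forall>q. 1 \<le> q \<and> q \<le> m (-3) \<longrightarrow> arr 0 m (arr 3 m q) \<noteq> j) \<and>
     1 \<le> m (-6) \<and> m (-6) \<le> n + 1 \<and> (\<forall>k. 1 \<le> k \<and> k < m (-6) \<longrightarrow> arr 0 m k \<noteq> j)"

text \<open>During augmentation the BFS tree still refers to the matching \<open>mate0\<close> it was built for; the
  part of the path not yet flipped is where the current matching agrees with \<open>mate0\<close>.\<close>

definition augment_inv :: "int \<Rightarrow> (int \<Rightarrow> int) \<Rightarrow> int \<Rightarrow> (int \<Rightarrow> int) \<Rightarrow> bool" where
  "augment_inv r mate0 qe m \<longleftrightarrow> input_intact m0 m \<and> m (-1) = r \<and>
     bfs_tree n adj mate0 (arr 1 m) (arr 2 m) (arr 3 m) r qe \<and>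
     partial_matching n adj (arr 0 m) r \<and> 1 \<le> m (-5) \<and> m (-5) \<le> n \<and> arr 1 m (m (-5)) = r \<and>
     (\<forall>i. 1 \<le> i \<and> i \<le> n \<longrightarrow> arr 0 m i \<noteq> m (-5)) \<and>
     (\<forall>q. 1 \<le> q \<and> q \<le> arr 2 m (m (-5)) \<longrightarrow> arr 0 m (arr 3 m q) = mate0 (arr 3 m q))"

definition correct_halt :: "ram_state \<Rightarrow> bool" where
  "correct_halt s \<longleftrightarrow> halted matching_prog s \<and> (0 < snd s 0 \<longleftrightarrow> perfect_matching n adj)"

lemma round_invD:
  assumes "round_inv r m"
  shows "input_intact m0 m" "m (-1) = r" "1 \<le> r" "r \<le> n + 1" "partial_matching n adj (arr 0 m) r"
     "\<forall>j. 1 \<le> j \<and> j \<le> n \<longrightarrow> 0 \<le> arr 1 m j \<and> arr 1 m j < r"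
  using assms unfolding round_inv_def by blast+

lemma queue_invD:
  assumes "queue_inv r p m"
  shows "input_intact m0 m" "m (-1) = r" "m (-2) = p"
     "bfs_tree n adj (arr 0 m) (arr 1 m) (arr 2 m) (arr 3 m) r (m (-3))"
     "queue_covers n (arr 0 m) (arr 1 m) (arr 3 m) r (m (-3)) 0" "1 \<le> p" "p \<le> m (-3) + 1"
     "rows_scanned n adj (arr 3 m) (arr 1 m) r p" "parents_at_most n (arr 1 m) (arr 2 m) r (p - 1)"
  using assms unfolding queue_inv_def by blast+

lemma scan_invD:
  assumes "scan_inv r p m"
  shows "input_intact m0 m" "m (-1) = r" "m (-2) = p"
     "bfs_tree n adj (arr 0 m) (arr 1 m) (arr 2 m) (arr 3 m) r (m (-3))"
     "queue_covers n (arr 0 m) (arr 1 m) (arr 3 m) r (m (-3)) 0" "1 \<le> p" "p \<le> m (-3)"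
     "m (-4) = arr 3 m p" "1 \<le> m (-5)" "m (-5) \<le> n + 1"
     "rows_scanned n adj (arr 3 m) (arr 1 m) r p" "row_scanned_below n adj (m (-4)) (arr 1 m) r (m (-5))"
     "parents_at_most n (arr 1 m) (arr 2 m) r p"
  using assms unfolding scan_inv_def by blast+

lemma search_invD:
  assumes "search_inv r p j m"
  shows "input_intact m0 m" "m (-1) = r" "m (-2) = p" "m (-5) = j" "1 \<le> j" "j \<le> n"
     "bfs_tree n adj (arr 0 m) (arr 1 m) (arr 2 m) (arr 3 m) r (m (-3))"
     "queue_covers n (arr 0 m) (arr 1 m) (arr 3 m) r (m (-3)) j" "1 \<le> p" "p \<le> m (-3)"
     "m (-4) = arr 3 m p" "rows_scanned n adj (arr 3 m) (arr 1 m) r p"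
     "row_scanned_below n adj (m (-4)) (arr 1 m) r (j + 1)"
     "parents_at_most n (arr 1 m) (arr 2 m) r p" "arr 1 m j = r" "arr 2 m j = p"
     "\<forall>q. 1 \<le> q \<and> q \<le> m (-3) \<longrightarrow> arr 0 m (arr 3 m q) \<noteq> j"
     "1 \<le> m (-6)" "m (-6) \<le> n + 1" "\<forall>k. 1 \<le> k \<and> k < m (-6) \<longrightarrow> arr 0 m k \<noteq> j"
  using assms unfolding search_inv_def by blast+

lemma augment_invD:
  assumes "augment_inv r mate0 qe m"
  shows "input_intact m0 m" "m (-1) = r" "bfs_tree n adj mate0 (arr 1 m) (arr 2 m) (arr 3 m) r qe"
     "partial_matching n adj (arr 0 m) r" "1 \<le> m (-5)" "m (-5) \<le> n" "arr 1 m (m (-5)) = r"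
     "\<forall>i. 1 \<le> i \<and> i \<le> n \<longrightarrow> arr 0 m i \<noteq> m (-5)"
     "\<forall>q. 1 \<le> q \<and> q \<le> arr 2 m (m (-5)) \<longrightarrow> arr 0 m (arr 3 m q) = mate0 (arr 3 m q)"
  using assms unfolding augment_inv_def by blast+

lemma augment_iter:
  assumes inv: "augment_inv r mate0 qe m"
  shows "reaches_within matching_prog (79, m) 30 (\<lambda>s. (fst s = 1 \<and> round_inv (r + 1) (snd s)) \<or>
     (fst s = 79 \<and> augment_inv r mate0 qe (snd s) \<and>
      nat (arr 2 (snd s) (snd s (-5))) < nat (arr 2 m (m (-5)))))"
proof -
  note d = augment_invD[OF inv]
  note t = bfs_treeD[OF d(3)]
  define j where "j = m (-5)"
  have j: "1 \<le> j" "j \<le> n" using d(5,6) unfolding j_def by auto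
  have pj: "1 \<le> arr 2 m j" "arr 2 m j \<le> qe" using t(11)[OF j d(7)[folded j_def]] by auto
  have qj: "1 \<le> arr 3 m (arr 2 m j)" using t(7)[OF pj] by auto
  note block = block_augment[OF d(1) m0_0 vars_def, folded j_def, OF j(1) pj(1) qj]
  show ?thesis
  proof (rule reaches_within_at_exitD[OF block], goal_cases)
    case (1 s)
    then consider (finished) "fst s = 1" | (continues) "fst s = 79" by auto
    then show ?case
    proof cases
      case finished
      with 1 have h: "arr 2 m j = 1" "input_intact m0 (snd s)"
        "vars (snd s) = ((arr 0 m)(arr 3 m (arr 2 m j) := j), arr 1 m, arr 2 m, arr 3 m, m (-1) + 1, arr 2 m j,
                         m (-3), arr 3 m (arr 2 m j), j, m (-6))"
        by auto
      note a = augment_finish[OF d(3) d(4) j d(7)[folded j_def] d(8)[folded j_def] h(1)]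
      show ?thesis using finished h a d(2) unfolding round_inv_def vars_eq by auto
    next
      case continues
      with 1 have h: "arr 2 m j \<noteq> 1" "input_intact m0 (snd s)"
        "vars (snd s) = ((arr 0 m)(arr 3 m (arr 2 m j) := j), arr 1 m, arr 2 m, arr 3 m, m (-1), arr 2 m j,
                         m (-3), arr 3 m (arr 2 m j), arr 0 m (arr 3 m (arr 2 m j)), m (-6))"
        by auto
      note a = augment_step[OF d(3) d(4) j d(7)[folded j_def] d(8)[folded j_def] d(9)[folded j_def] h(1)]
      have "augment_inv r mate0 qe (snd s)" using h a d(2) d(3) unfolding augment_inv_def vars_eq by auto
      moreover have "nat (arr 2 (snd s) (snd s (-5))) < nat (arr 2 m (m (-5)))"
        using h a unfolding vars_eq j_def by auto
      ultimately show ?thesis using continues by auto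
    qed
  qed
qed

lemma augment_loop:
  assumes inv: "augment_inv r mate0 qe m"
  shows "reaches_within matching_prog (79, m) ((L + 1) * 30) (\<lambda>s. fst s = 1 \<and> round_inv (r + 1) (snd s))"
proof (rule reaches_within_loop[where I = "\<lambda>s. fst s = 79 \<and> augment_inv r mate0 qe (snd s)"
    and \<mu> = "\<lambda>s. nat (arr 2 (snd s) (snd s (-5)))"])
  fix s :: ram_state assume "fst s = 79 \<and> augment_inv r mate0 qe (snd s)"
  then show "reaches_within matching_prog s 30 (\<lambda>s'. (fst s' = 1 \<and> round_inv (r + 1) (snd s')) \<or>
      ((fst s' = 79 \<and> augment_inv r mate0 qe (snd s')) \<and>
       nat (arr 2 (snd s') (snd s' (-5))) < nat (arr 2 (snd s) (snd s (-5)))))"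
    using augment_iter[of r mate0 qe "snd s"] by (cases s) auto
next
  note d = augment_invD[OF inv]
  have "arr 2 m (m (-5)) \<le> qe" "qe \<le> n" using bfs_treeD(5)[OF d(3)] bfs_treeD(11)[OF d(3) d(5-7)] by auto
  then show "nat (arr 2 (snd (79, m)) (snd (79, m) (-5))) \<le> L" unfolding L_def by simp
qed (use inv in simp)

lemma augment_inv_start:
  assumes inv: "search_inv r p j m"
    and "n < m (-6)" "input_intact m0 m'" "vars m' = vars m"
  shows "augment_inv r (arr 0 m) (m (-3)) m'"
proof -
  note d = search_invD[OF inv]
  have "\<forall>i. 1 \<le> i \<and> i \<le> n \<longrightarrow> arr 0 m i \<noteq> j" using d(20) assms(2) by auto
  then show ?thesis unfolding augment_inv_def
    using assms(3) assms(4)[unfolded vars_def] d(2,4-7,15) bfs_treeD(3)[OF d(7)] by auto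
qed

definition search_time :: nat where "search_time = 25 + (L + 1) * 30"

lemma search_iter:
  assumes inv: "search_inv r p j m"
  shows "reaches_within matching_prog (51, m) search_time (\<lambda>s. (fst s = 1 \<and> round_inv (r + 1) (snd s)) \<or>
     (fst s = 15 \<and> scan_inv r p (snd s) \<and> snd s (-5) = j + 1) \<or>
     (fst s = 51 \<and> search_inv r p j (snd s) \<and> nat (n + 1 - snd s (-6)) < nat (n + 1 - m (-6))))"
proof -
  note d = search_invD[OF inv]
  note t = bfs_treeD[OF d(7)]
  have "0 \<le> m (-3)" using t(4) by simp
  note block = block_search[OF d(1) m0_0 vars_def d(18) this]
  show ?thesis unfolding search_time_def
  proof (rule reaches_within_trans[OF block], goal_cases)
    case (1 s)
    then consider (free) "fst s = 79" | (enqueue) "fst s = 15" | (next_k) "fst s = 51"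
      by (auto simp: at_exit_def)
    then show ?case
    proof cases
      case free
      with 1 have "n < m (-6)" "input_intact m0 (snd s)" "vars (snd s) = vars m"
        by (simp_all add: at_exit_def vars_def)
      from augment_loop[OF augment_inv_start[OF inv this]] show ?thesis
        using free by (cases s) (auto elim: reaches_within_mono)
    next
      case enqueue
      with 1 have h: "m (-6) \<le> n" "arr 0 m (m (-6)) = j" "input_intact m0 (snd s)"
        "vars (snd s) = (arr 0 m, arr 1 m, arr 2 m, (arr 3 m)(m (-3) + 1 := m (-6)), m (-1), m (-2),
                         m (-3) + 1, m (-4), m (-5) + 1, m (-6))"
        using d(4) by (simp_all add: at_exit_def)
      note b = bfs_enqueue[OF d(7) d(8) d(12) d(13)[unfolded d(11)] d(14) d(5) d(6) d(15) d(16) d(17) d(18)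
          h(1) h(2) d(9) d(10)]
      have "scan_inv r p (snd s)" using h b d(1-6) d(9-11) unfolding scan_inv_def vars_eq by auto
      moreover have "snd s (-5) = j + 1" using h d(4) unfolding vars_eq by auto
      ultimately show ?thesis using enqueue by (intro reaches_within_here) auto
    next
      case next_k
      with 1 have h: "m (-6) \<le> n" "arr 0 m (m (-6)) \<noteq> j" "input_intact m0 (snd s)"
        "vars (snd s) = (arr 0 m, arr 1 m, arr 2 m, arr 3 m, m (-1), m (-2), m (-3), m (-4), m (-5), m (-6) + 1)"
        using d(4) by (simp_all add: at_exit_def)
      have "\<forall>k. 1 \<le> k \<and> k < m (-6) + 1 \<longrightarrow> arr 0 m k \<noteq> j"
        using d(20) h(2) by (metis zless_add1_eq)
      then have "search_inv r p j (snd s)"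
        unfolding search_inv_def using h(4)[unfolded vars_eq] d(2,3,4) h(1,3) d(5-18) by auto
      moreover have "nat (n + 1 - snd s (-6)) < nat (n + 1 - m (-6))" using h unfolding vars_eq by auto
      ultimately show ?thesis using next_k by (intro reaches_within_here) auto
    qed
  qed
qed

lemma search_loop:
  assumes inv: "search_inv r p j m"
  shows "reaches_within matching_prog (51, m) ((L + 1) * search_time)
    (\<lambda>s. (fst s = 1 \<and> round_inv (r + 1) (snd s)) \<or>
     (fst s = 15 \<and> scan_inv r p (snd s) \<and> snd s (-5) = j + 1))"
proof (rule reaches_within_loop[where I = "\<lambda>s. fst s = 51 \<and> search_inv r p j (snd s)"
    and \<mu> = "\<lambda>s. nat (n + 1 - snd s (-6))"])
  fix s :: ram_state assume "fst s = 51 \<and> search_inv r p j (snd s)"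
  then show "reaches_within matching_prog s search_time (\<lambda>s'.
      ((fst s' = 1 \<and> round_inv (r + 1) (snd s')) \<or>
       (fst s' = 15 \<and> scan_inv r p (snd s') \<and> snd s' (-5) = j + 1)) \<or>
      ((fst s' = 51 \<and> search_inv r p j (snd s')) \<and> nat (n + 1 - snd s' (-6)) < nat (n + 1 - snd s (-6))))"
    by (cases s) (auto elim: reaches_within_mono[OF search_iter])
qed (use inv search_invD(18)[OF inv] in \<open>auto simp: L_def\<close>)

lemma search_inv_start:
  assumes inv: "scan_inv r p m"
    and h: "m (-5) \<le> n" "arr 1 m (m (-5)) \<noteq> r" "adj (m (-4)) (m (-5))" "input_intact m0 m'"
      "vars m' = (arr 0 m, (arr 1 m)(m (-5) := r), (arr 2 m)(m (-5) := p), arr 3 m,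
                  r, p, m (-3), m (-4), m (-5), 1)"
  shows "search_inv r p (m (-5)) m'"
proof -
  note d = scan_invD[OF inv]
  note v = bfs_visit[OF d(4) d(5) d(11) d(12)[unfolded d(8)] d(13) d(9) h(1,2) h(3)[unfolded d(8)] d(6,7)]
  show ?thesis unfolding search_inv_def using h(4) h(5)[unfolded vars_eq] h(1) d(6-9) v by auto
qed

definition scan_time :: nat where "scan_time = 40 + (L + 1) * search_time"

lemma scan_iter:
  assumes inv: "scan_inv r p m"
  shows "reaches_within matching_prog (15, m) scan_time (\<lambda>s. (fst s = 1 \<and> round_inv (r + 1) (snd s)) \<or>
     (fst s = 7 \<and> queue_inv r (p + 1) (snd s)) \<or>
     (fst s = 15 \<and> scan_inv r p (snd s) \<and> nat (n + 1 - snd s (-5)) < nat (n + 1 - m (-5))))"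
proof -
  note d = scan_invD[OF inv]
  note t = bfs_treeD[OF d(4)]
  have "1 \<le> m (-4)" using t(7)[OF d(6) d(7)] d(8) by auto
  note block = block_scan[OF d(1) m0_0 vars_def this d(9) n_nonneg]
  show ?thesis unfolding scan_time_def
  proof (rule reaches_within_trans[OF block], goal_cases)
    case (1 s)
    then consider (next_p) "fst s = 7" | (next_j) "fst s = 15" | (visit) "fst s = 51"
      by (auto simp: at_exit_def)
    then show ?case
    proof cases
      case next_p
      with 1 have h: "n < m (-5)" "input_intact m0 (snd s)"
        "vars (snd s) = (arr 0 m, arr 1 m, arr 2 m, arr 3 m, m (-1), m (-2) + 1, m (-3), m (-4), m (-5), m (-6))"
        by (simp_all add: at_exit_def)
      have "m (-5) = n + 1" using h(1) d(10) by auto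
      then have "rows_scanned n adj (arr 3 m) (arr 1 m) r (p + 1)"
        using rows_scanned_next[OF d(11)] d(12) d(8) by auto
      then have "queue_inv r (p + 1) (snd s)"
        unfolding queue_inv_def using h(3)[unfolded vars_eq] d(2,3) h(2) d(4-7,13) by auto
      then show ?thesis using next_p by (intro reaches_within_here) auto
    next
      case next_j
      with 1 have h: "m (-5) \<le> n" "arr 1 m (m (-5)) = m (-1) \<or> \<not> adj (m (-4)) (m (-5))" "input_intact m0 (snd s)"
        "vars (snd s) = (arr 0 m, arr 1 m, arr 2 m, arr 3 m, m (-1), m (-2), m (-3), m (-4), m (-5) + 1, m (-6))"
        by (simp_all add: at_exit_def)
      have "row_scanned_below n adj (m (-4)) (arr 1 m) r (m (-5) + 1)"
        using row_scanned_below_next[OF d(12)] h(2) d(2) by auto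
      then have "scan_inv r p (snd s)"
        unfolding scan_inv_def using h(4)[unfolded vars_eq] d(2,3) h(1,3) d(4-9,11,13) by auto
      moreover have "nat (n + 1 - snd s (-5)) < nat (n + 1 - m (-5))" using h(1,4) unfolding vars_eq by auto
      ultimately show ?thesis using next_j by (intro reaches_within_here) auto
    next
      case visit
      with 1 have "m (-5) \<le> n" "arr 1 m (m (-5)) \<noteq> r" "adj (m (-4)) (m (-5))" "input_intact m0 (snd s)"
        "vars (snd s) = (arr 0 m, (arr 1 m)(m (-5) := r), (arr 2 m)(m (-5) := p), arr 3 m,
                         r, p, m (-3), m (-4), m (-5), 1)"
        using d(2,3) by (simp_all add: at_exit_def)
      from search_loop[OF search_inv_start[OF inv this]] show ?thesis
        using visit \<open>m (-5) \<le> n\<close> by (cases s) (auto elim!: reaches_within_mono)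
    qed
  qed
qed

lemma scan_loop:
  assumes inv: "scan_inv r p m"
  shows "reaches_within matching_prog (15, m) ((L + 1) * scan_time)
    (\<lambda>s. (fst s = 1 \<and> round_inv (r + 1) (snd s)) \<or> (fst s = 7 \<and> queue_inv r (p + 1) (snd s)))"
proof (rule reaches_within_loop[where I = "\<lambda>s. fst s = 15 \<and> scan_inv r p (snd s)"
    and \<mu> = "\<lambda>s. nat (n + 1 - snd s (-5))"])
  fix s :: ram_state assume "fst s = 15 \<and> scan_inv r p (snd s)"
  then show "reaches_within matching_prog s scan_time (\<lambda>s'.
      ((fst s' = 1 \<and> round_inv (r + 1) (snd s')) \<or> (fst s' = 7 \<and> queue_inv r (p + 1) (snd s'))) \<or>
      ((fst s' = 15 \<and> scan_inv r p (snd s')) \<and> nat (n + 1 - snd s' (-5)) < nat (n + 1 - snd s (-5))))"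
    by (cases s) (auto elim: reaches_within_mono[OF scan_iter])
qed (use inv scan_invD(9)[OF inv] in \<open>auto simp: L_def\<close>)

definition queue_time :: nat where "queue_time = 10 + (L + 1) * scan_time"

lemma queue_iter:
  assumes inv: "queue_inv r p m"
  shows "reaches_within matching_prog (7, m) queue_time
    (\<lambda>s. correct_halt s \<or> (fst s = 1 \<and> round_inv (r + 1) (snd s)) \<or>
     (fst s = 7 \<and> queue_inv r (p + 1) (snd s) \<and> nat (n + 1 - (p + 1)) < nat (n + 1 - p)))"
proof -
  note d = queue_invD[OF inv]
  note t = bfs_treeD[OF d(4)]
  note block = block_queue[OF d(1) m0_0 vars_def d(6)[folded d(3)]]
  show ?thesis unfolding queue_time_def
  proof (rule reaches_within_trans[OF block], goal_cases)
    case (1 s)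
    then consider (reject) "fst s = 108" | (scan) "fst s = 15" by (auto simp: at_exit_def)
    then show ?case
    proof cases
      case reject
      with 1 have h: "m (-3) < p" "snd s 0 = 0" using d(3) by (simp_all add: at_exit_def)
      then have "p = m (-3) + 1" using d(7) by auto
      then have "\<not> perfect_matching n adj"
        using bfs_exhausted_no_perfect_matching[OF d(4) d(5)] d(8) by auto
      moreover have "halted matching_prog s" using reject by (simp add: halted_def matching_prog_nth)
      ultimately show ?thesis using h(2) by (intro reaches_within_here) (simp add: correct_halt_def)
    next
      case scan
      with 1 have h: "p \<le> m (-3)" "input_intact m0 (snd s)"
        "vars (snd s) = (arr 0 m, arr 1 m, arr 2 m, arr 3 m, m (-1), m (-2), m (-3), arr 3 m (m (-2)), 1, m (-6))"
        using d(3) by (simp_all add: at_exit_def)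
      have "parents_at_most n (arr 1 m) (arr 2 m) r p" "row_scanned_below n adj (arr 3 m p) (arr 1 m) r 1"
        using d(9) unfolding parents_at_most_def row_scanned_below_def by auto
      then have "scan_inv r p (snd s)"
        unfolding scan_inv_def using h(3)[unfolded vars_eq] d(2,3) h(1,2) d(4-6,8) n_nonneg by auto
      from scan_loop[OF this] show ?thesis using scan h(1) t(5) by (cases s) (auto elim!: reaches_within_mono)
    qed
  qed
qed

lemma queue_loop:
  assumes inv: "queue_inv r p m"
  shows "reaches_within matching_prog (7, m) ((L + 1) * queue_time)
    (\<lambda>s. correct_halt s \<or> (fst s = 1 \<and> round_inv (r + 1) (snd s)))"
proof (rule reaches_within_loop[where I = "\<lambda>s. fst s = 7 \<and> (\<exists>p. queue_inv r p (snd s))"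
    and \<mu> = "\<lambda>s. nat (n + 1 - snd s (-2))"])
  fix s :: ram_state assume "fst s = 7 \<and> (\<exists>p. queue_inv r p (snd s))"
  then obtain p' m' where s: "s = (7, m')" and inv': "queue_inv r p' m'" by (cases s) auto
  show "reaches_within matching_prog s queue_time (\<lambda>s'.
      (correct_halt s' \<or> (fst s' = 1 \<and> round_inv (r + 1) (snd s'))) \<or>
      ((fst s' = 7 \<and> (\<exists>p. queue_inv r p (snd s'))) \<and> nat (n + 1 - snd s' (-2)) < nat (n + 1 - snd s (-2))))"
    unfolding s
  proof (rule reaches_within_mono[OF queue_iter[OF inv'] le_refl])
    fix s' assume "correct_halt s' \<or> (fst s' = 1 \<and> round_inv (r + 1) (snd s')) \<or>
      (fst s' = 7 \<and> queue_inv r (p' + 1) (snd s') \<and> nat (n + 1 - (p' + 1)) < nat (n + 1 - p'))"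
    then show "(correct_halt s' \<or> (fst s' = 1 \<and> round_inv (r + 1) (snd s'))) \<or>
      ((fst s' = 7 \<and> (\<exists>p. queue_inv r p (snd s'))) \<and> nat (n + 1 - snd s' (-2)) < nat (n + 1 - snd (7, m') (-2)))"
      using queue_invD(3)[OF inv'] queue_invD(3)[of r "p' + 1" "snd s'"] by auto
  qed
qed (use inv queue_invD(3,6)[OF inv] in \<open>auto simp: L_def\<close>)

definition round_time :: nat where "round_time = 10 + (L + 1) * queue_time"

lemma round_iter:
  assumes inv: "round_inv r m"
  shows "reaches_within matching_prog (1, m) round_time
    (\<lambda>s. correct_halt s \<or> (fst s = 1 \<and> round_inv (r + 1) (snd s)))"
proof -
  note d = round_invD[OF inv]
  show ?thesis unfolding round_time_def
  proof (rule reaches_within_trans[OF block_round[OF d(1) m0_0 vars_def]], goal_cases)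
    case (1 s)
    then consider (accept) "fst s = 106" | (bfs) "fst s = 7" by (auto simp: at_exit_def)
    then show ?case
    proof cases
      case accept
      with 1 have h: "n < r" "snd s 0 = 1" using d(2) by (simp_all add: at_exit_def)
      then have "r = n + 1" using d(4) by simp
      then have "perfect_matching n adj" using partial_matching_complete d(5) by simp
      moreover have "halted matching_prog s" using accept by (simp add: halted_def matching_prog_nth)
      ultimately show ?thesis using h(2) by (intro reaches_within_here) (simp add: correct_halt_def)
    next
      case bfs
      with 1 have h: "r \<le> n" "input_intact m0 (snd s)"
        "vars (snd s) = (arr 0 m, arr 1 m, arr 2 m, (arr 3 m)(1 := m (-1)), m (-1), 1, 1, m (-4), m (-5), m (-6))"
        using d(2) by (simp_all add: at_exit_def)
      have "queue_inv r 1 (snd s)"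
        unfolding queue_inv_def using h(3)[unfolded vars_eq] d(2) h(2) bfs_tree_start[OF d(5) d(3) h(1) d(6)]
        by auto
      from queue_loop[OF this] show ?thesis using bfs by (cases s) simp
    qed
  qed
qed

lemma round_loop:
  assumes inv: "round_inv r m"
  shows "reaches_within matching_prog (1, m) ((L + 1) * round_time) correct_halt"
proof (rule reaches_within_loop[where I = "\<lambda>s. fst s = 1 \<and> (\<exists>r. round_inv r (snd s))"
    and \<mu> = "\<lambda>s. nat (n + 1 - snd s (-1))"])
  fix s :: ram_state assume "fst s = 1 \<and> (\<exists>r. round_inv r (snd s))"
  then obtain r' m' where s: "s = (1, m')" and inv': "round_inv r' m'" by (cases s) auto
  show "reaches_within matching_prog s round_time (\<lambda>s'. correct_halt s' \<or>
      ((fst s' = 1 \<and> (\<exists>r. round_inv r (snd s'))) \<and> nat (n + 1 - snd s' (-1)) < nat (n + 1 - snd s (-1))))"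
    unfolding s
  proof (rule reaches_within_mono[OF round_iter[OF inv'] le_refl])
    fix s' assume "correct_halt s' \<or> (fst s' = 1 \<and> round_inv (r' + 1) (snd s'))"
    then show "correct_halt s' \<or> ((fst s' = 1 \<and> (\<exists>r. round_inv r (snd s'))) \<and>
        nat (n + 1 - snd s' (-1)) < nat (n + 1 - snd (1, m') (-1)))"
      using round_invD(2)[OF inv'] round_invD(2,4)[of "r' + 1" "snd s'"] by auto
  qed
qed (use inv round_invD(2,3)[OF inv] in \<open>auto simp: L_def\<close>)

lemma prog_reaches_correct_halt:
  "reaches_within matching_prog (0, m0) (1 + (L + 1) * round_time) correct_halt"
proof -
  have "input_intact m0 m0" by (simp add: input_intact_def)
  then show ?thesis
  proof (rule reaches_within_trans[OF block_init], goal_cases)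
  case (1 s)
  have "arr k m0 x = 0" if "1 \<le> x" "0 \<le> k" for k x
    using that neg_cells_zero unfolding arr_def arr_cell_def by auto
  then have "partial_matching n adj (arr 0 (snd s)) 1" "\<forall>j. 1 \<le> j \<and> j \<le> n \<longrightarrow> arr 1 (snd s) j = 0"
    using 1 unfolding partial_matching_def vars_def by auto
  then have "round_inv 1 (snd s)" using 1 n_nonneg unfolding round_inv_def vars_def by auto
  then show ?case using round_loop[of 1 "snd s"] 1 by (cases s) simp
  qed
qed

lemma time_bound: "1 + (L + 1) * round_time \<le> 116 * (L + 1) ^ 5"
proof -
  define x where "x = L + 1"
  have pow: "x ^ k \<le> x ^ 5" if "k \<le> 5" for k
    using that by (intro power_increasing) (auto simp: x_def)
  have "1 + (L + 1) * round_time = 1 + 10 * x + 10 * x^2 + 40 * x^3 + 25 * x^4 + 30 * x^5"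
    unfolding round_time_def queue_time_def scan_time_def search_time_def x_def[symmetric]
    by (simp add: algebra_simps power_numeral_reduce)
  then show ?thesis using pow[of 0] pow[of 1] pow[of 2] pow[of 3] pow[of 4] unfolding x_def by simp
qed

lemma prog_decides_matching:
  "\<exists>k \<le> 116 * (nat n + 1) ^ 5. halted matching_prog ((step matching_prog ^^ k) (0, m0)) \<and>
     (0 < snd ((step matching_prog ^^ k) (0, m0)) 0 \<longleftrightarrow> perfect_matching n (input_adj m0 n))"
proof -
  have "reaches_within matching_prog (0, m0) (116 * (L + 1) ^ 5) correct_halt"
    using prog_reaches_correct_halt time_bound by (rule reaches_within_mono) auto
  then show ?thesis unfolding reaches_within_def correct_halt_def L_def by auto
qed

end

section \<open>The encoded instance\<close>

lemma length_enc_pts: "length (enc_pts ps) = 2 * length ps"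
  by (induction ps) (auto simp: enc_pts_def)

lemma nth_enc_pts:
  "k < length ps \<Longrightarrow> enc_pts ps ! (2 * k) = fst (ps ! k) \<and> enc_pts ps ! (2 * k + 1) = snd (ps ! k)"
proof (induction ps arbitrary: k)
  case (Cons a ps)
  have "enc_pts (a # ps) = fst a # snd a # enc_pts ps" by (cases a) (simp add: enc_pts_def)
  then show ?case using Cons by (cases k) (auto simp: Suc_eq_plus1[symmetric])
qed simp

lemma snd_init:
  "snd (init xs) a = (if 0 \<le> a \<and> a < int (length xs) then xs ! nat a else 0)"
  by (simp add: init_def)

lemma input_memory_enc_instance:
  "length Cs = length Ct \<Longrightarrow> input_memory (snd (init (enc_instance Cs Ct))) (int (length Cs))"
  by unfold_locales (simp_all add: snd_init enc_instance_def)

lemma enc_instance_cells: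
  assumes "length Cs = length Ct" and i: "1 \<le> i" "i \<le> int (length Cs)"
  defines "m0 \<equiv> snd (init (enc_instance Cs Ct))" and "n \<equiv> int (length Cs)"
  shows "m0 (2 * i - 1) = fst (Cs ! nat (i - 1))" "m0 (2 * i) = snd (Cs ! nat (i - 1))"
    "m0 (2 * n + 2 * i - 1) = fst (Ct ! nat (i - 1))" "m0 (2 * n + 2 * i) = snd (Ct ! nat (i - 1))"
proof -
  define k where "k = nat (i - 1)"
  have k: "k < length Cs" "k < length Ct" "i = int k + 1" using assms(1) i unfolding k_def by auto
  have cell: "m0 (int t + 1) = (enc_pts Cs @ enc_pts Ct) ! t" if "t < 4 * length Cs" for t
    using that assms(1) unfolding m0_def snd_init enc_instance_def by (simp add: length_enc_pts nat_add_distrib)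
  have "m0 (2 * i - 1) = enc_pts Cs ! (2 * k)" "m0 (2 * i) = enc_pts Cs ! (2 * k + 1)"
    using cell[of "2 * k"] cell[of "2 * k + 1"] k by (simp_all add: nth_append length_enc_pts algebra_simps)
  then show "m0 (2 * i - 1) = fst (Cs ! nat (i - 1))" "m0 (2 * i) = snd (Cs ! nat (i - 1))"
    using nth_enc_pts[OF k(1)] unfolding k_def by simp_all
  have "m0 (2 * n + 2 * i - 1) = enc_pts Ct ! (2 * k)" "m0 (2 * n + 2 * i) = enc_pts Ct ! (2 * k + 1)"
    using cell[of "2 * length Cs + 2 * k"] cell[of "2 * length Cs + 2 * k + 1"] k assms(1)
    unfolding n_def by (simp_all add: nth_append length_enc_pts algebra_simps)
  then show "m0 (2 * n + 2 * i - 1) = fst (Ct ! nat (i - 1))" "m0 (2 * n + 2 * i) = snd (Ct ! nat (i - 1))"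
    using nth_enc_pts[OF k(2)] unfolding k_def by simp_all
qed

lemma input_adj_enc_instance:
  assumes "length Cs = length Ct" "i \<in> {1..int (length Cs)}" "j \<in> {1..int (length Cs)}"
  shows "input_adj (snd (init (enc_instance Cs Ct))) (int (length Cs)) i j \<longleftrightarrow>
         move_ok (Cs ! nat (i - 1)) (Ct ! nat (j - 1))"
  using enc_instance_cells[OF assms(1), of i] enc_instance_cells[OF assms(1), of j] assms(2,3)
  unfolding input_adj_def move_ok_iff by simp

lemma matching_prog_decides_schedule_1:
  assumes "distinct Cs" "distinct Ct" "length Cs = length Ct"
  shows "\<exists>t \<le> 116 * (length Cs + 1) ^ 5.
           decides_in matching_prog (enc_instance Cs Ct) t (schedule 1 (set Cs) (set Ct))"
proof -
  let ?m0 = "snd (init (enc_instance Cs Ct))" and ?n = "int (length Cs)"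
  interpret input_memory ?m0 ?n by (rule input_memory_enc_instance[OF assms(3)])
  have "schedule 1 (set Cs) (set Ct) \<longleftrightarrow> perfect_matching ?n (input_adj ?m0 ?n)"
    unfolding schedule_1_iff
    by (rule transformation_iff_perfect_matching[OF assms]) (simp add: input_adj_enc_instance[OF assms(3)])
  moreover have "init (enc_instance Cs Ct) = (0, ?m0)" by (simp add: init_def)
  ultimately show ?thesis using prog_decides_matching unfolding decides_in_def by auto
qed

theorem theorem1:
  shows "\<exists>(P :: instr list) (c :: nat) (d :: nat).
           \<forall>Cs Ct :: pos list.
             distinct Cs \<and> distinct Ct \<and> length Cs = length Ct \<longrightarrow>
             (\<exists>t. t \<le> c * (input_size (enc_instance Cs Ct) + 1) ^ d \<and>
                  decides_in P (enc_instance Cs Ct) t (schedule 1 (set Cs) (set Ct)))"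
proof (rule exI[of _ matching_prog], rule exI[of _ 116], rule exI[of _ 5], intro allI impI)
  fix Cs Ct :: "pos list"
  assume "distinct Cs \<and> distinct Ct \<and> length Cs = length Ct"
  then obtain t where t: "t \<le> 116 * (length Cs + 1) ^ 5"
    "decides_in matching_prog (enc_instance Cs Ct) t (schedule 1 (set Cs) (set Ct))"
    using matching_prog_decides_schedule_1 by blast
  have "length Cs \<le> input_size (enc_instance Cs Ct)"
    by (simp add: input_size_def enc_instance_def length_enc_pts)
  then have "(length Cs + 1) ^ 5 \<le> (input_size (enc_instance Cs Ct) + 1) ^ 5"
    by (simp add: power_mono)
  with t show "\<exists>t. t \<le> 116 * (input_size (enc_instance Cs Ct) + 1) ^ 5 \<and>
      decides_in matching_prog (enc_instance Cs Ct) t (schedule 1 (set Cs) (set Ct))"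
    by (meson le_trans mult_le_mono2)
qed

end
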